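(* Let $\lambda$ be a partition of $n$. Then $$\sum_{\pi\in S_\lambda} q^{\mathrm{maj}(\pi)}t^{\mathrm{des}(\pi)}=\sum_{\nu\trianglerighteq\lambda}K_{\nu\lambda}\sum_{T\in\mathrm{QYT}(\nu)}q^{\mathrm{maj}(T)}t^{\mathrm{des}(T)},$$ where $\nu$ ranges over partitions of $n$ dominating $\lambda$.
   Context: $S_\lambda$ is the set of multiset permutations (words) of the multiset $\{1^{\lambda_1},2^{\lambda_2},\dots\}$; for a word $\pi=\pi_1\cdots\pi_n$, $\mathrm{Des}(\pi)=\{i:\pi_i>\pi_{i+1}\}$, $\mathrm{des}(\pi)=|\mathrm{Des}(\pi)|$, $\mathrm{maj}(\pi)=\sum_{i\in\mathrm{Des}(\pi)}i$. $\nu\trianglerighteq\lambda$ means $\nu_1+\cdots+\nu_i\ge\lambda_1+\cdots+\lambda_i$ for all $i$. $K_{\nu\lambda}$ is the Kostka number (number of semistandard Young tableaux of shape $\nu$ and weight $\lambda$). Tableaux are in French convention. For a standard Young tableau $T$, $\mathrm{Des}(T)=\{i: i+1$ lies in a strictly higher row than $i\}$, and $\mathrm{des},\mathrm{maj}$ are defined as for words. A quasi-Yamanouchi tableau (QYT) is a semistandard Young tableau such that whenever an entry $i\ge2$ appears, some instance of $i$ lies in a strictly higher row than some instance of $i-1$; $\mathrm{QYT}(\nu)$ is the set of QYT of shape $\nu$. Standardization (replace the $1$'s by $1,2,\dots$ left to right, then the $2$'s by the next integers left to right, etc.) is a bijection from $\mathrm{QYT}(\nu)$ to standard Young tableaux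 of shape $\nu$; $\mathrm{maj},\mathrm{des}$ of a QYT are those of its standardization. *)

theory Defs
  imports Main "HOL-Library.Multiset"
begin

definition partitions_of :: "nat \<Rightarrow> nat list set" where
  "partitions_of n = {nu. sorted_wrt (\<ge>) nu \<and> 0 \<notin> set nu \<and> sum_list nu = n}"

definition dominates :: "nat list \<Rightarrow> nat list \<Rightarrow> bool" where
  "dominates nu la \<longleftrightarrow> (\<forall>i. sum_list (take i la) \<le> sum_list (take i nu))"

definition words :: "nat list \<Rightarrow> nat list set" where
  "words la = {w. mset w = (\<Sum>i<length la. replicate_mset (la ! i) (Suc i))}"

text \<open>Descent set of a word, positions 1-indexed.\<close>
definition word_Des :: "nat list \<Rightarrow> nat set" where
  "word_Des w = {i. 1 \<le> i \<and> i < length w \<and> w ! (i - 1) > w ! i}"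

definition word_des :: "nat list \<Rightarrow> nat" where
  "word_des w = card (word_Des w)"

definition word_maj :: "nat list \<Rightarrow> nat" where
  "word_maj w = \<Sum>(word_Des w)"

text \<open>Young diagram in French convention: cell (r,c) = row r (row 0 at the bottom,
  larger r is higher), column c, both 0-indexed.\<close>
definition cells :: "nat list \<Rightarrow> (nat \<times> nat) set" where
  "cells nu = {(r, c). r < length nu \<and> c < nu ! r}"

text \<open>A tableau is a filling of the cells (value 0 outside the shape).\<close>
definition ssyt :: "nat list \<Rightarrow> (nat \<times> nat \<Rightarrow> nat) \<Rightarrow> bool" where
  "ssyt nu T \<longleftrightarrow>
     (\<forall>x. x \<notin> cells nu \<longrightarrow> T x = 0) \<and>
     (\<forall>x\<in>cells nu. 1 \<le> T x) \<and>
     (\<forall>r c. (r, Suc c) \<in> cells nu \<longrightarrow> T (r, c) \<le> T (r, Suc c)) \<and>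
     (\<forall>r c. (Suc r, c) \<in> cells nu \<longrightarrow> T (r, c) < T (Suc r, c))"

definition has_weight :: "nat list \<Rightarrow> nat list \<Rightarrow> (nat \<times> nat \<Rightarrow> nat) \<Rightarrow> bool" where
  "has_weight nu la T \<longleftrightarrow>
     (\<forall>k. card {x \<in> cells nu. T x = k} = (if 1 \<le> k \<and> k \<le> length la then la ! (k - 1) else 0))"

definition kostka :: "nat list \<Rightarrow> nat list \<Rightarrow> nat" where
  "kostka nu la = card {T. ssyt nu T \<and> has_weight nu la T}"

definition qyt :: "nat list \<Rightarrow> (nat \<times> nat \<Rightarrow> nat) \<Rightarrow> bool" where
  "qyt nu T \<longleftrightarrow> ssyt nu T \<and>
     (\<forall>i\<ge>2. (\<exists>x\<in>cells nu. T x = i) \<longrightarrow>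
        (\<exists>x\<in>cells nu. \<exists>y\<in>cells nu. T x = i \<and> T y = i - 1 \<and> fst x > fst y))"

definition QYT :: "nat list \<Rightarrow> (nat \<times> nat \<Rightarrow> nat) set" where
  "QYT nu = {T. qyt nu T}"

definition standardize :: "nat list \<Rightarrow> (nat \<times> nat \<Rightarrow> nat) \<Rightarrow> (nat \<times> nat \<Rightarrow> nat)" where
  "standardize nu T = (\<lambda>x. if x \<in> cells nu then
      Suc (card {y \<in> cells nu. T y < T x \<or> (T y = T x \<and> snd y < snd x)}) else 0)"

definition syt_Des :: "nat list \<Rightarrow> (nat \<times> nat \<Rightarrow> nat) \<Rightarrow> nat set" where
  "syt_Des nu S = {i. 1 \<le> i \<and>
     (\<exists>x\<in>cells nu. \<exists>y\<in>cells nu. S x = i \<and> S y = Suc i \<and> fst y > fst x)}"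

definition tab_des :: "nat list \<Rightarrow> (nat \<times> nat \<Rightarrow> nat) \<Rightarrow> nat" where
  "tab_des nu T = card (syt_Des nu (standardize nu T))"

definition tab_maj :: "nat list \<Rightarrow> (nat \<times> nat \<Rightarrow> nat) \<Rightarrow> nat" where
  "tab_maj nu T = \<Sum>(syt_Des nu (standardize nu T))"

end

theory Submission
  imports Defs "HOL-Combinatorics.Multiset_Permutations"
begin

text \<open>Robinson--Schensted row insertion turns a word \<open>w\<close> of content \<open>\<lambda>\<close> bijectively into a
  pair \<open>(P, S)\<close> of a semistandard tableau \<open>P\<close> of content \<open>\<lambda>\<close> and a standard tableau \<open>S\<close> of
  the same shape, \<open>S\<close> recording the order in which the cells were created. By the row bumping
  lemma, \<open>i\<close> is a descent of \<open>w\<close> exactly when the cell created at step \<open>i + 1\<close> lies in a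
  higher row than the one created at step \<open>i\<close>, so \<open>Des w = Des S\<close>. Grouping by the shape
  \<open>\<nu>\<close>, every standard tableau of shape \<open>\<nu>\<close> is paired with \<open>K\<^sub>\<nu>\<^sub>\<lambda>\<close> tableaux \<open>P\<close>, and
  \<open>K\<^sub>\<nu>\<^sub>\<lambda> = 0\<close> unless \<open>\<nu>\<close> dominates \<open>\<lambda>\<close> because the entries \<open>\<le> i\<close> of \<open>P\<close> lie in its
  lowest \<open>i\<close> rows. Finally, standardization maps \<open>QYT(\<nu>)\<close> bijectively onto the standard
  tableaux of shape \<open>\<nu>\<close>: the inverse writes into each cell of \<open>S\<close> one plus the number of
  descents of \<open>S\<close> below its entry.\<close>


section \<open>Row insertion\<close>

text \<open>Inserting \<open>x\<close> into a sorted row \<open>r\<close> bumps the entry at position \<open>bump_pos x r\<close>, or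
  appends \<open>x\<close> if that position is \<open>length r\<close>; reverse bumping of \<open>y\<close> replaces the entry at
  position \<open>unbump_pos y r - 1\<close>.\<close>

definition bump_pos :: "nat \<Rightarrow> nat list \<Rightarrow> nat" where
  "bump_pos x r = length (takeWhile (\<lambda>z. z \<le> x) r)"

definition unbump_pos :: "nat \<Rightarrow> nat list \<Rightarrow> nat" where
  "unbump_pos y r = length (takeWhile (\<lambda>z. z < y) r)"

lemma bump_pos_le: "bump_pos x r \<le> length r"
  unfolding bump_pos_def by (rule length_takeWhile_le)

lemma unbump_pos_le: "unbump_pos y r \<le> length r"
  unfolding unbump_pos_def by (rule length_takeWhile_le)

lemma bump_pos_eq_length_iff: "bump_pos x r = length r \<longleftrightarrow> (\<forall>z\<in>set r. z \<le> x)"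
  unfolding bump_pos_def by (induction r) auto

lemma less_length_takeWhile_iff:
  assumes "sorted r" "k < length r" "\<And>a b. a \<le> b \<Longrightarrow> P b \<Longrightarrow> P a"
  shows "k < length (takeWhile P r) \<longleftrightarrow> P (r ! k)"
proof
  assume "k < length (takeWhile P r)"
  then show "P (r ! k)"
    by (metis nth_mem set_takeWhileD takeWhile_nth)
next
  assume "P (r ! k)"
  have "Suc k \<le> length (takeWhile P r)"
  proof (rule length_takeWhile_less_P_nth)
    fix i assume "i < Suc k"
    then have "r ! i \<le> r ! k" using assms(1,2) by (intro sorted_nth_mono) auto
    then show "P (r ! i)" using assms(3) \<open>P (r ! k)\<close> by blast
  qed (use assms in simp)
  then show "k < length (takeWhile P r)" by simp
qed

lemma less_bump_pos_iff: "sorted r \<Longrightarrow> k < length r \<Longrightarrow> k < bump_pos x r \<longleftrightarrow> r ! k \<le> x"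
  unfolding bump_pos_def by (rule less_length_takeWhile_iff) auto

lemma less_unbump_pos_iff: "sorted r \<Longrightarrow> k < length r \<Longrightarrow> k < unbump_pos y r \<longleftrightarrow> r ! k < y"
  unfolding unbump_pos_def by (rule less_length_takeWhile_iff) auto

lemma nth_before_bump_pos: "sorted r \<Longrightarrow> k < bump_pos x r \<Longrightarrow> r ! k \<le> x"
  using less_bump_pos_iff bump_pos_le by (meson order.strict_trans2)

lemma nth_from_bump_pos: "sorted r \<Longrightarrow> bump_pos x r \<le> k \<Longrightarrow> k < length r \<Longrightarrow> x < r ! k"
  using less_bump_pos_iff by (meson not_le)

lemma nth_before_unbump_pos: "sorted r \<Longrightarrow> k < unbump_pos y r \<Longrightarrow> r ! k < y"
  using less_unbump_pos_iff unbump_pos_le by (meson order.strict_trans2)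

lemma nth_from_unbump_pos: "sorted r \<Longrightarrow> unbump_pos y r \<le> k \<Longrightarrow> k < length r \<Longrightarrow> y \<le> r ! k"
  using less_unbump_pos_iff by (meson not_le)

lemma nat_eqI_less_iff:
  fixes a b L :: nat
  assumes "a \<le> L" "b \<le> L" "\<And>k. k < L \<Longrightarrow> k < a \<longleftrightarrow> k < b"
  shows "a = b"
  using assms(3)[of "min a b"] assms(1,2) by (cases a b rule: linorder_cases) auto

lemma sorted_list_update:
  assumes "sorted r" "\<And>k. k < c \<Longrightarrow> r ! k \<le> v" "\<And>k. c < k \<Longrightarrow> k < length r \<Longrightarrow> v \<le> r ! k"
  shows "sorted (r[c := v])"
  unfolding sorted_iff_nth_mono
proof (intro allI impI)
  fix i j assume "i \<le> j" "j < length (r[c := v])"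
  then show "r[c := v] ! i \<le> r[c := v] ! j"
    using assms sorted_nth_mono[OF assms(1)]
    by (cases "i = c"; cases "j = c") (auto simp: nth_list_update)
qed

text \<open>A semistandard tableau is also handled as the list of its rows, bottom row first;
  \<open>col_strict r s\<close> says that row \<open>s\<close> may sit on top of row \<open>r\<close>.\<close>

definition col_strict :: "nat list \<Rightarrow> nat list \<Rightarrow> bool" where
  "col_strict r s \<longleftrightarrow> length s \<le> length r \<and> (\<forall>k<length s. r ! k < s ! k)"

definition ssyt_rows :: "nat list list \<Rightarrow> bool" where
  "ssyt_rows P \<longleftrightarrow> (\<forall>r\<in>set P. sorted r \<and> r \<noteq> []) \<and>
     (\<forall>i. Suc i < length P \<longrightarrow> col_strict (P ! i) (P ! Suc i))"

lemma ssyt_rows_Nil [simp]: "ssyt_rows []"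
  by (simp add: ssyt_rows_def)

lemma ssyt_rows_Cons:
  "ssyt_rows (r # rs) \<longleftrightarrow> sorted r \<and> r \<noteq> [] \<and> (rs \<noteq> [] \<longrightarrow> col_strict r (hd rs)) \<and> ssyt_rows rs"
  unfolding ssyt_rows_def
  by (cases rs) (auto simp: All_less_Suc2)

definition bump_row :: "nat \<Rightarrow> nat list \<Rightarrow> nat list" where
  "bump_row x r = (if bump_pos x r = length r then r @ [x] else r[bump_pos x r := x])"

lemma length_bump_row:
  "length (bump_row x r) = (if bump_pos x r = length r then Suc (length r) else length r)"
  by (simp add: bump_row_def)

lemma nth_bump_row:
  "k < length (bump_row x r) \<Longrightarrow> bump_row x r ! k = (if k = bump_pos x r then x else r ! k)"
  by (auto simp: bump_row_def nth_append)

lemma mset_bump_row: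
  "bump_pos x r < length r \<Longrightarrow> add_mset (r ! bump_pos x r) (mset (bump_row x r)) = add_mset x (mset r)"
  by (simp add: bump_row_def mset_update)

lemma sorted_bump_row:
  assumes "sorted r"
  shows "sorted (bump_row x r)"
proof (cases "bump_pos x r = length r")
  case True
  then show ?thesis using assms bump_pos_eq_length_iff by (simp add: bump_row_def sorted_append)
next
  case False
  have "sorted (r[bump_pos x r := x])"
    by (rule sorted_list_update[OF assms])
      (auto intro: nth_before_bump_pos[OF assms] less_imp_le nth_from_bump_pos[OF assms])
  then show ?thesis using False by (simp add: bump_row_def)
qed

fun row_insert :: "nat \<Rightarrow> nat list list \<Rightarrow> nat list list" where
  "row_insert x [] = [[x]]"
| "row_insert x (r # rs) = bump_row x r #
     (if bump_pos x r = length r then rs else row_insert (r ! bump_pos x r) rs)"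

fun insertion_row :: "nat \<Rightarrow> nat list list \<Rightarrow> nat" where
  "insertion_row x [] = 0"
| "insertion_row x (r # rs) =
     (if bump_pos x r = length r then 0 else Suc (insertion_row (r ! bump_pos x r) rs))"

lemma col_strict_bump_row:
  assumes r: "sorted r" and s: "sorted s" and rs: "col_strict r s" and inside: "bump_pos x r < length r"
  shows "col_strict (bump_row x r) (bump_row (r ! bump_pos x r) s)"
proof -
  define c where "c = bump_pos x r"
  define y where "y = r ! c"
  have xy: "x < y" and below: "\<And>k. k < c \<Longrightarrow> r ! k \<le> x"
    using nth_from_bump_pos[OF r _ inside] nth_before_bump_pos[OF r] unfolding c_def y_def by auto
  have ys: "y < s ! c" if "c < length s"
    using rs inside that by (simp add: col_strict_def y_def c_def)
  have "bump_pos y s \<le> c"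
  proof (cases "c < length s")
    case True
    then show ?thesis using less_bump_pos_iff[OF s True, of y] ys by simp
  qed (use bump_pos_le[of y s] in simp)
  moreover have "r ! k < y" if "k < c" for k
    using below[OF that] xy by simp
  moreover have "bump_row x r = r[c := x]" using inside by (simp add: bump_row_def c_def)
  ultimately show ?thesis
    using rs xy ys inside unfolding c_def[symmetric] y_def[symmetric]
    by (auto simp: col_strict_def length_bump_row nth_bump_row nth_list_update split: if_splits)
qed

lemma ssyt_rows_row_insert: "ssyt_rows P \<Longrightarrow> ssyt_rows (row_insert x P)"
proof (induction P arbitrary: x)
  case (Cons r rs)
  have r: "sorted r" "r \<noteq> []" and rrs: "rs \<noteq> [] \<Longrightarrow> col_strict r (hd rs)" and rs: "ssyt_rows rs"
    using Cons.prems by (auto simp: ssyt_rows_Cons)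
  have head: "sorted (bump_row x r)" "bump_row x r \<noteq> []"
    using sorted_bump_row[OF r(1)] r(2) by (auto simp: bump_row_def)
  show ?case
  proof (cases "bump_pos x r = length r")
    case True
    then have "col_strict (bump_row x r) (hd rs)" if "rs \<noteq> []"
      using rrs[OF that] by (auto simp: col_strict_def bump_row_def nth_append)
    then show ?thesis using True head rs by (simp add: ssyt_rows_Cons)
  next
    case False
    then have c: "bump_pos x r < length r" using bump_pos_le[of x r] by simp
    let ?y = "r ! bump_pos x r"
    have "col_strict (bump_row x r) (hd (row_insert ?y rs))"
    proof (cases rs)
      case Nil
      have "bump_row x r ! 0 \<le> bump_row x r ! bump_pos x r"
        using head(1) c by (intro sorted_nth_mono) (auto simp: length_bump_row)
      then show ?thesis
        using Nil c nth_from_bump_pos[OF r(1) order.refl c]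
        by (simp add: col_strict_def length_bump_row nth_bump_row)
    next
      case (Cons s ss)
      then show ?thesis
        using col_strict_bump_row[OF r(1) _ _ c] rs rrs by (simp add: ssyt_rows_Cons)
    qed
    then show ?thesis using False head Cons.IH[OF rs] by (simp add: ssyt_rows_Cons)
  qed
qed (simp add: ssyt_rows_Cons)

definition add_cell :: "nat list \<Rightarrow> nat \<Rightarrow> nat list" where
  "add_cell nu i = (if i < length nu then nu[i := Suc (nu ! i)] else nu @ [1])"

lemma insertion_row_le: "insertion_row x P \<le> length P"
  by (induction P arbitrary: x) auto

lemma shape_row_insert: "map length (row_insert x P) = add_cell (map length P) (insertion_row x P)"
proof (induction P arbitrary: x)
  case (Cons r rs)
  then show ?case
    using insertion_row_le[of "r ! bump_pos x r" rs]
    by (auto simp: add_cell_def length_bump_row)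
qed (simp add: add_cell_def)

lemma mset_row_insert: "mset (concat (row_insert x P)) = add_mset x (mset (concat P))"
proof (induction P arbitrary: x)
  case (Cons r rs)
  show ?case
  proof (cases "bump_pos x r = length r")
    case False
    then have "bump_pos x r < length r" using bump_pos_le[of x r] by simp
    then show ?thesis using False Cons.IH mset_bump_row[of x r] by simp
  qed (simp add: bump_row_def)
qed simp

fun reverse_insert :: "nat list list \<Rightarrow> nat \<Rightarrow> nat list list \<times> nat" where
  "reverse_insert [] i = ([], 0)"
| "reverse_insert (r # rs) 0 = (if butlast r = [] then rs else butlast r # rs, last r)"
| "reverse_insert (r # rs) (Suc i) = (case reverse_insert rs i of (rs', y) \<Rightarrow>
     (r[unbump_pos y r - 1 := y] # rs', r ! (unbump_pos y r - 1)))"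

lemma unbump_pos_bump_row:
  assumes r: "sorted r" and c: "bump_pos x r < length r"
  shows "unbump_pos (r ! bump_pos x r) (bump_row x r) = Suc (bump_pos x r)"
proof (rule nat_eqI_less_iff)
  let ?c = "bump_pos x r" and ?y = "r ! bump_pos x r"
  show "unbump_pos ?y (bump_row x r) \<le> length r"
    using unbump_pos_le[of ?y "bump_row x r"] c by (simp add: length_bump_row)
  fix k assume k: "k < length r"
  have "k < unbump_pos ?y (bump_row x r) \<longleftrightarrow> bump_row x r ! k < ?y"
    using less_unbump_pos_iff[OF sorted_bump_row[OF r]] k c by (simp add: length_bump_row)
  also have "\<dots> \<longleftrightarrow> k < Suc ?c"
    using nth_before_bump_pos[OF r, of k x] nth_from_bump_pos[OF r order.refl c]
      sorted_nth_mono[OF r, of ?c k] k c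
    by (cases k ?c rule: linorder_cases) (auto simp: nth_bump_row length_bump_row)
  finally show "k < unbump_pos ?y (bump_row x r) \<longleftrightarrow> k < Suc ?c" .
qed (use c in simp)

lemma reverse_insert_row_insert:
  "ssyt_rows P \<Longrightarrow> reverse_insert (row_insert x P) (insertion_row x P) = (P, x)"
proof (induction P arbitrary: x)
  case (Cons r rs)
  have r: "sorted r" "r \<noteq> []" and rs: "ssyt_rows rs" using Cons.prems by (auto simp: ssyt_rows_Cons)
  show ?case
  proof (cases "bump_pos x r = length r")
    case False
    then have c: "bump_pos x r < length r" using bump_pos_le[of x r] by simp
    then show ?thesis
      using False Cons.IH[OF rs] unbump_pos_bump_row[OF r(1) c] by (simp add: bump_row_def)
  qed (use r in \<open>simp add: bump_row_def\<close>)
qed simp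

lemma col_strict_unbump:
  assumes r: "sorted r" and s: "sorted s" and rs: "col_strict r (bump_row y s)"
  shows "0 < unbump_pos y r" "col_strict (r[unbump_pos y r - 1 := y]) s"
proof -
  define d where "d = bump_pos y s"
  have d: "d < length (bump_row y s)" "bump_row y s ! d = y"
    using bump_pos_le[of y s] by (auto simp: d_def length_bump_row nth_bump_row)
  have len: "length s \<le> length r" "d < length r"
    using rs d(1) by (auto simp: col_strict_def length_bump_row split: if_splits)
  have rd: "r ! d < y" using rs d by (auto simp: col_strict_def)
  then have "d < unbump_pos y r" using less_unbump_pos_iff[OF r len(2)] by simp
  then show "0 < unbump_pos y r" by simp
  define c where "c = unbump_pos y r - 1"
  have "d \<le> c" using \<open>d < unbump_pos y r\<close> by (simp add: c_def)
  then have above: "y < s ! k" if "c \<le> k" "k < length s" for k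
    using nth_from_bump_pos[OF s] that by (simp add: d_def)
  have "r[c := y] ! k < s ! k" if k: "k < length s" for k
  proof (cases "k = c")
    case False
    have "y < s ! d" if "d < length s"
      using nth_from_bump_pos[OF s, of y d] that by (simp add: d_def)
    moreover have "r ! k < s ! k" if "k \<noteq> d"
    proof -
      have k': "k < length (bump_row y s)" using k by (simp add: length_bump_row)
      then have "r ! k < bump_row y s ! k" using rs by (simp add: col_strict_def)
      then show ?thesis using k' that by (simp add: nth_bump_row d_def)
    qed
    ultimately show ?thesis using False k rd by (cases "k = d") auto
  qed (use above k len in simp)
  then show "col_strict (r[c := y]) s"
    using len by (simp add: col_strict_def)
qed

lemma unbump_pos_bounds:
  assumes "sorted r" "0 < unbump_pos y r"
  shows "unbump_pos y r - 1 < length r" "r ! (unbump_pos y r - 1) < y"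
  using unbump_pos_le[of y r] assms nth_before_unbump_pos[OF assms(1), of "unbump_pos y r - 1"]
  by auto

lemma sorted_unbump:
  assumes r: "sorted r" and p: "0 < unbump_pos y r"
  shows "sorted (r[unbump_pos y r - 1 := y])"
proof (rule sorted_list_update[OF r])
  show "r ! k \<le> y" if "k < unbump_pos y r - 1" for k
    using sorted_nth_mono[OF r, of k "unbump_pos y r - 1"] that unbump_pos_bounds[OF r p] by simp
  show "y \<le> r ! k" if "unbump_pos y r - 1 < k" "k < length r" for k
    using nth_from_unbump_pos[OF r, of y k] that by simp
qed

lemma bump_pos_unbump:
  assumes r: "sorted r" and p: "0 < unbump_pos y r"
  defines "c \<equiv> unbump_pos y r - 1"
  shows "bump_pos (r ! c) (r[c := y]) = c"
proof (rule nat_eqI_less_iff)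
  have c: "c < length r" "r ! c < y"
    using unbump_pos_bounds[OF r p] by (simp_all add: c_def)
  have sorted: "sorted (r[c := y])" using sorted_unbump[OF r p] by (simp add: c_def)
  show "bump_pos (r ! c) (r[c := y]) \<le> length r" using bump_pos_le[of _ "r[c := y]"] by simp
  show "c \<le> length r" using c by simp
  fix k assume k: "k < length r"
  have "r[c := y] ! k \<le> r ! c \<longleftrightarrow> k < c"
  proof (cases k c rule: linorder_cases)
    case less
    then show ?thesis using sorted_nth_mono[OF r, of k c] c by simp
  next
    case greater
    then have "y \<le> r ! k" using nth_from_unbump_pos[OF r, of y k] k by (simp add: c_def)
    then show ?thesis using greater c by simp
  qed (use c in simp)
  then show "k < bump_pos (r ! c) (r[c := y]) \<longleftrightarrow> k < c"
    using less_bump_pos_iff[OF sorted, of k] k by simp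
qed

lemma bump_pos_butlast:
  assumes "sorted r" "r \<noteq> []"
  shows "bump_pos (last r) (butlast r) = length (butlast r)"
proof -
  have "sorted (butlast r @ [last r])" using assms by simp
  then show ?thesis by (simp only: sorted_append bump_pos_eq_length_iff) simp
qed

lemma row_insert_unbump:
  assumes r: "sorted r" "r \<noteq> []" and rs': "ssyt_rows rs'" and top: "col_strict r (hd (row_insert y rs'))"
  defines "c \<equiv> unbump_pos y r - 1"
  shows "ssyt_rows (r[c := y] # rs') \<and> row_insert (r ! c) (r[c := y] # rs') = r # row_insert y rs' \<and>
    insertion_row (r ! c) (r[c := y] # rs') = Suc (insertion_row y rs')"
proof -
  have unbump: "0 < unbump_pos y r \<and> (rs' \<noteq> [] \<longrightarrow> col_strict (r[c := y]) (hd rs'))"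
  proof (cases rs')
    case Nil
    then have "r ! 0 < y" using top by (auto simp: col_strict_def)
    then show ?thesis using less_unbump_pos_iff[OF r(1), of 0 y] r(2) Nil by simp
  next
    case (Cons s' ss')
    then have "sorted s'" "hd (row_insert y rs') = bump_row y s'" using rs' by (auto simp: ssyt_rows_Cons)
    then show ?thesis using col_strict_unbump[OF r(1)] top Cons by (simp add: c_def)
  qed
  then have "bump_pos (r ! c) (r[c := y]) = c" "c < length r"
    using bump_pos_unbump[OF r(1)] unbump_pos_bounds[OF r(1)] by (simp_all add: c_def)
  then show ?thesis
    using rs' unbump sorted_unbump[OF r(1)] r(2) by (simp add: ssyt_rows_Cons bump_row_def c_def)
qed

definition corner :: "nat list \<Rightarrow> nat \<Rightarrow> bool" where
  "corner nu i \<longleftrightarrow> i < length nu \<and> (Suc i < length nu \<longrightarrow> nu ! Suc i < nu ! i)"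

lemma row_insert_reverse_insert:
  "ssyt_rows P \<Longrightarrow> corner (map length P) i \<Longrightarrow> reverse_insert P i = (P', x) \<Longrightarrow>
    ssyt_rows P' \<and> row_insert x P' = P \<and> insertion_row x P' = i"
proof (induction P arbitrary: i P' x)
  case Nil
  then show ?case by (simp add: corner_def)
next
  case (Cons r rs)
  have r: "sorted r" "r \<noteq> []" and rrs: "rs \<noteq> [] \<Longrightarrow> col_strict r (hd rs)" and rs: "ssyt_rows rs"
    using Cons.prems by (auto simp: ssyt_rows_Cons)
  have short: "length (hd rs) < length r" if "rs \<noteq> []" "i = 0"
    using Cons.prems(2) that by (simp add: corner_def hd_conv_nth)
  show ?case
  proof (cases i)
    case 0
    show ?thesis
    proof (cases "butlast r = []")
      case True
      then have "length r = 1" using r(2) by (cases r rule: rev_cases) auto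
      then have "rs = []"
        using short 0 rs by (cases rs) (auto simp: ssyt_rows_Cons)
      then show ?thesis
        using Cons.prems(3) 0 True append_butlast_last_id[OF r(2)]
        by (auto simp: bump_row_def bump_pos_def)
    next
      case False
      have P': "P' = butlast r # rs" "x = last r" using Cons.prems(3) 0 False by auto
      have "col_strict (butlast r) (hd rs)" if "rs \<noteq> []"
        using rrs[OF that] short[OF that 0] by (auto simp: col_strict_def nth_butlast)
      then show ?thesis
        using P' 0 False r rs bump_pos_butlast[OF r]
        by (simp add: ssyt_rows_Cons sorted_butlast bump_row_def)
    qed
  next
    case (Suc j)
    have "rs \<noteq> []" and cj: "corner (map length rs) j" using Cons.prems(2) Suc by (auto simp: corner_def)
    obtain rs' y where rv: "reverse_insert rs j = (rs', y)" by (cases "reverse_insert rs j") auto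
    have IH: "ssyt_rows rs'" "row_insert y rs' = rs" "insertion_row y rs' = j"
      using Cons.IH[OF rs cj rv] by auto
    then show ?thesis
      using Cons.prems(3) Suc rv row_insert_unbump[OF r IH(1)] rrs[OF \<open>rs \<noteq> []\<close>] by auto
  qed
qed

lemma insertion_row_row_insert_le:
  "ssyt_rows P \<Longrightarrow> x \<le> x' \<Longrightarrow> insertion_row x' (row_insert x P) \<le> insertion_row x P"
proof (induction P arbitrary: x x')
  case Nil
  then show ?case by (simp add: bump_pos_def)
next
  case (Cons r rs)
  have r: "sorted r" and rs: "ssyt_rows rs" using Cons.prems by (auto simp: ssyt_rows_Cons)
  let ?r' = "bump_row x r"
  have r': "sorted ?r'" using sorted_bump_row[OF r] .
  show ?case
  proof (cases "bump_pos x r = length r")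
    case True
    then have "\<forall>z\<in>set r. z \<le> x" by (simp only: bump_pos_eq_length_iff)
    then have "\<forall>z\<in>set ?r'. z \<le> x'" using True Cons.prems(2) by (auto simp: bump_row_def)
    then have "bump_pos x' ?r' = length ?r'" by (simp only: bump_pos_eq_length_iff)
    then show ?thesis using True by simp
  next
    case False
    define c where "c = bump_pos x r"
    have c: "c < length r" "?r' ! c = x" using False bump_pos_le[of x r]
      by (auto simp: c_def bump_row_def)
    show ?thesis
    proof (cases "bump_pos x' ?r' = length ?r'")
      case False
      have "c < bump_pos x' ?r'"
        using less_bump_pos_iff[OF r', of c x'] c Cons.prems(2) by (simp add: length_bump_row)
      then have "r ! c \<le> ?r' ! bump_pos x' ?r'"
        using False \<open>\<not> bump_pos x r = length r\<close> bump_pos_le[of x' ?r']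
          sorted_nth_mono[OF r, of c "bump_pos x' ?r'"]
        by (auto simp: nth_bump_row length_bump_row c_def)
      then show ?thesis
        using Cons.IH[OF rs] \<open>\<not> bump_pos x r = length r\<close> False by (simp add: c_def)
    qed simp
  qed
qed

lemma insertion_row_row_insert_gt:
  "ssyt_rows P \<Longrightarrow> x' < x \<Longrightarrow> insertion_row x P < insertion_row x' (row_insert x P)"
proof (induction P arbitrary: x x')
  case Nil
  then show ?case by (simp add: bump_pos_def)
next
  case (Cons r rs)
  have r: "sorted r" and rs: "ssyt_rows rs" using Cons.prems by (auto simp: ssyt_rows_Cons)
  let ?r' = "bump_row x r"
  have r': "sorted ?r'" using sorted_bump_row[OF r] .
  have x: "bump_pos x r < length ?r'" "?r' ! bump_pos x r = x"
    using bump_pos_le[of x r] by (auto simp: length_bump_row nth_bump_row)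
  then have p': "bump_pos x' ?r' \<le> bump_pos x r"
    using less_bump_pos_iff[OF r' x(1), of x'] Cons.prems(2) by simp
  show ?case
  proof (cases "bump_pos x r = length r")
    case True
    then show ?thesis using p' by (simp add: length_bump_row)
  next
    case False
    have "?r' ! bump_pos x' ?r' \<le> x"
      using sorted_nth_mono[OF r' p' x(1)] x(2) by simp
    also have "x < r ! bump_pos x r"
      using nth_from_bump_pos[OF r order.refl] False bump_pos_le[of x r] by simp
    finally show ?thesis
      using Cons.IH[OF rs] False p' x(1) by (simp add: length_bump_row)
  qed
qed


section \<open>Standard Young tableaux\<close>

definition row_length :: "nat list \<Rightarrow> nat \<Rightarrow> nat" where
  "row_length nu i = (if i < length nu then nu ! i else 0)"

definition syt :: "nat list \<Rightarrow> (nat \<times> nat \<Rightarrow> nat) \<Rightarrow> bool" where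
  "syt nu S \<longleftrightarrow> ssyt nu S \<and> S ` cells nu = {1..sum_list nu}"

lemma cells_Sigma: "cells nu = Sigma {..<length nu} (\<lambda>r. {..<nu ! r})"
  by (auto simp: cells_def)

lemma finite_cells [simp]: "finite (cells nu)"
  unfolding cells_Sigma by auto

lemma card_cells: "card (cells nu) = sum_list nu"
  unfolding cells_Sigma by (simp add: sum_list_sum_nth atLeast0LessThan)

lemma cells_add_cell:
  "i \<le> length nu \<Longrightarrow> cells (add_cell nu i) = insert (i, row_length nu i) (cells nu)"
  unfolding cells_def add_cell_def row_length_def
  by (auto simp: nth_list_update nth_append less_Suc_eq split: if_splits)

lemma new_cell_notin_cells: "(i, row_length nu i) \<notin> cells nu"
  by (auto simp: cells_def row_length_def)

lemma sum_list_add_cell: "i \<le> length nu \<Longrightarrow> sum_list (add_cell nu i) = Suc (sum_list nu)"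
  by (auto simp: add_cell_def sum_list_update)

lemma nth_add_cell: "i \<le> length nu \<Longrightarrow> add_cell nu i ! i = Suc (row_length nu i)"
  by (auto simp: add_cell_def row_length_def nth_append)

lemma cells_downward_closed:
  assumes "sorted_wrt (\<ge>) nu" "(r', c') \<in> cells nu" "r \<le> r'" "c \<le> c'"
  shows "(r, c) \<in> cells nu"
proof -
  have "nu ! r' \<le> nu ! r"
    using assms sorted_wrt_nth_less[OF assms(1), of r r'] by (cases "r = r'") (auto simp: cells_def)
  then show ?thesis using assms by (auto simp: cells_def)
qed

lemma ssyt_rows_shape: "ssyt_rows P \<Longrightarrow> sorted_wrt (\<ge>) (map length P)"
  by (subst sorted_wrt_iff_nth_Suc_transp) (auto simp: ssyt_rows_def col_strict_def transp_def)

lemma ssyt_zero_outside: "ssyt nu S \<Longrightarrow> x \<notin> cells nu \<Longrightarrow> S x = 0"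
  by (cases x) (simp add: ssyt_def)

lemma ssyt_pos: "ssyt nu T \<Longrightarrow> x \<in> cells nu \<Longrightarrow> 1 \<le> T x"
  by (simp add: ssyt_def)

lemma syt_pos: "syt nu S \<Longrightarrow> x \<in> cells nu \<Longrightarrow> 1 \<le> S x"
  unfolding syt_def ssyt_def by blast

lemma syt_le: "syt nu S \<Longrightarrow> S x \<le> sum_list nu"
  unfolding syt_def by (cases "x \<in> cells nu") (auto simp: ssyt_zero_outside)

lemma syt_inj: "syt nu S \<Longrightarrow> inj_on S (cells nu)"
  by (rule eq_card_imp_inj_on) (auto simp: syt_def card_cells)

lemma syt_surj: "syt nu S \<Longrightarrow> 1 \<le> v \<Longrightarrow> v \<le> sum_list nu \<Longrightarrow> \<exists>x\<in>cells nu. S x = v"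
  unfolding syt_def by (metis atLeastAtMost_iff imageE)

lemma syt_add_cell:
  assumes S: "syt nu S" and nu: "sorted_wrt (\<ge>) nu" and i: "i \<le> length nu"
  shows "syt (add_cell nu i) (S((i, row_length nu i) := Suc (sum_list nu)))"
proof -
  let ?x0 = "(i, row_length nu i)" and ?m = "sum_list nu"
  let ?S = "S(?x0 := Suc ?m)"
  have cells: "cells (add_cell nu i) = insert ?x0 (cells nu)" using cells_add_cell[OF i] .
  have ss: "ssyt nu S" using S by (simp add: syt_def)
  have "ssyt (add_cell nu i) ?S"
    unfolding ssyt_def
  proof (intro conjI allI impI ballI)
    fix x assume "x \<notin> cells (add_cell nu i)"
    then show "?S x = 0" using cells ss ssyt_zero_outside by auto
  next
    fix x assume "x \<in> cells (add_cell nu i)"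
    then show "1 \<le> ?S x" using cells ss by (auto simp: ssyt_def)
  next
    fix r c assume rc: "(r, Suc c) \<in> cells (add_cell nu i)"
    have "(r, c) \<noteq> ?x0" if "(r, Suc c) \<in> cells nu"
      using that new_cell_notin_cells[of i nu] by (auto simp: cells_def)
    then show "?S (r, c) \<le> ?S (r, Suc c)"
      using rc cells ss syt_le[OF S, of "(r, c)"] by (auto simp: ssyt_def)
  next
    fix r c assume rc: "(Suc r, c) \<in> cells (add_cell nu i)"
    have "(r, c) \<noteq> ?x0" if "(Suc r, c) \<in> cells nu"
      using cells_downward_closed[OF nu that, of r c] new_cell_notin_cells[of i nu] by auto
    then show "?S (r, c) < ?S (Suc r, c)"
      using rc cells ss syt_le[OF S, of "(r, c)"] by (auto simp: ssyt_def)
  qed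
  moreover have "?S ` cells (add_cell nu i) = insert (Suc ?m) (S ` cells nu)"
    using cells new_cell_notin_cells[of i nu] by auto
  ultimately show ?thesis using S sum_list_add_cell[OF i] by (auto simp: syt_def)
qed

lemma syt_Des_add_cell:
  assumes S: "syt nu S" and i: "i \<le> length nu"
  shows "syt_Des (add_cell nu i) (S((i, row_length nu i) := Suc (sum_list nu))) =
    syt_Des nu S \<union> {j. j = sum_list nu \<and> 1 \<le> j \<and> (\<exists>x\<in>cells nu. S x = j \<and> fst x < i)}"
proof -
  let ?x0 = "(i, row_length nu i)" and ?m = "sum_list nu"
  let ?S = "S(?x0 := Suc ?m)"
  have cells: "cells (add_cell nu i) = insert ?x0 (cells nu)" using cells_add_cell[OF i] .
  have x0: "?x0 \<notin> cells nu" by (rule new_cell_notin_cells)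
  have le: "\<And>x. S x \<le> ?m" using syt_le[OF S] .
  show ?thesis
  proof (intro set_eqI iffI)
    fix j assume "j \<in> syt_Des (add_cell nu i) ?S"
    then obtain x y where j: "1 \<le> j" "x \<in> cells (add_cell nu i)" "y \<in> cells (add_cell nu i)"
      "?S x = j" "?S y = Suc j" "fst x < fst y" unfolding syt_Des_def by blast
    have "x \<noteq> ?x0" using j le[of y] by (cases "y = ?x0") auto
    then show "j \<in> syt_Des nu S \<union> {j. j = ?m \<and> 1 \<le> j \<and> (\<exists>x\<in>cells nu. S x = j \<and> fst x < i)}"
      using j cells le[of y] unfolding syt_Des_def by (cases "y = ?x0") auto
  next
    fix j assume "j \<in> syt_Des nu S \<union> {j. j = ?m \<and> 1 \<le> j \<and> (\<exists>x\<in>cells nu. S x = j \<and> fst x < i)}"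
    then show "j \<in> syt_Des (add_cell nu i) ?S"
    proof
      assume "j \<in> syt_Des nu S"
      then obtain x y where j: "1 \<le> j" "x \<in> cells nu" "y \<in> cells nu"
        "S x = j" "S y = Suc j" "fst x < fst y" unfolding syt_Des_def by blast
      then have "x \<noteq> ?x0" "y \<noteq> ?x0" using x0 by auto
      then show ?thesis unfolding syt_Des_def using j cells
        by (intro CollectI conjI bexI[of _ x] bexI[of _ y]) auto
    next
      assume "j \<in> {j. j = ?m \<and> 1 \<le> j \<and> (\<exists>x\<in>cells nu. S x = j \<and> fst x < i)}"
      then obtain x where j: "j = ?m" "1 \<le> j" "x \<in> cells nu" "S x = ?m" "fst x < i" by blast
      then have "x \<noteq> ?x0" using x0 by auto
      then show ?thesis unfolding syt_Des_def using j cells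
        by (intro CollectI conjI bexI[of _ x] bexI[of _ ?x0]) auto
    qed
  qed
qed

lemma syt_remove_max:
  assumes S: "syt (add_cell nu i) S" and nu: "sorted_wrt (\<ge>) nu" and i: "i \<le> length nu"
    and max: "S (i, row_length nu i) = Suc (sum_list nu)"
  shows "syt nu (S((i, row_length nu i) := 0))"
proof -
  let ?x0 = "(i, row_length nu i)"
  let ?S = "S(?x0 := 0)"
  have cells: "cells (add_cell nu i) = insert ?x0 (cells nu)" using cells_add_cell[OF i] .
  have x0: "?x0 \<notin> cells nu" by (rule new_cell_notin_cells)
  have ss: "ssyt (add_cell nu i) S" using S by (simp add: syt_def)
  have ssyt: "ssyt nu ?S"
    unfolding ssyt_def
  proof (intro conjI allI impI ballI)
    fix x assume "x \<notin> cells nu"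
    then show "?S x = 0" using cells ssyt_zero_outside[OF ss, of x] by auto
  next
    fix x assume "x \<in> cells nu"
    then show "1 \<le> ?S x" using cells ss x0 by (auto simp: ssyt_def)
  next
    fix r c assume rc: "(r, Suc c) \<in> cells nu"
    then have "(r, c) \<in> cells nu" by (auto simp: cells_def)
    then show "?S (r, c) \<le> ?S (r, Suc c)" using rc x0 cells ss by (auto simp: ssyt_def)
  next
    fix r c assume rc: "(Suc r, c) \<in> cells nu"
    then have "(r, c) \<in> cells nu" using cells_downward_closed[OF nu rc] by simp
    then show "?S (r, c) < ?S (Suc r, c)" using rc x0 cells ss by (auto simp: ssyt_def)
  qed
  have "?S ` cells nu = S ` (cells (add_cell nu i) - {?x0})"
    using cells x0 by auto
  also have "\<dots> = S ` cells (add_cell nu i) - {S ?x0}"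
    by (subst inj_on_image_set_diff[OF syt_inj[OF S]]) (use cells in auto)
  also have "\<dots> = {1..sum_list nu}"
    using S max sum_list_add_cell[OF i] by (auto simp: syt_def)
  finally show ?thesis using ssyt by (simp add: syt_def)
qed

lemma max_entry_corner:
  assumes S: "syt nu S" and x: "(i, c) \<in> cells nu" and max: "S (i, c) = sum_list nu"
  shows "corner nu i" "Suc c = nu ! i"
proof -
  have ss: "ssyt nu S" using S by (simp add: syt_def)
  have "(i, Suc c) \<notin> cells nu"
  proof
    assume right: "(i, Suc c) \<in> cells nu"
    then have "S (i, c) \<le> S (i, Suc c)" using ss by (simp add: ssyt_def)
    then have "S (i, Suc c) = S (i, c)" using syt_le[OF S, of "(i, Suc c)"] max by simp
    then show False using inj_onD[OF syt_inj[OF S] _ right x] by simp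
  qed
  moreover have "(Suc i, c) \<notin> cells nu"
  proof
    assume "(Suc i, c) \<in> cells nu"
    then have "S (i, c) < S (Suc i, c)" using ss by (simp add: ssyt_def)
    then show False using syt_le[OF S, of "(Suc i, c)"] max by simp
  qed
  ultimately show "Suc c = nu ! i" "corner nu i" using x by (auto simp: cells_def corner_def)
qed


section \<open>The Robinson--Schensted correspondence\<close>

definition rsk_step ::
    "nat list list \<times> (nat \<times> nat \<Rightarrow> nat) \<Rightarrow> nat \<Rightarrow> nat list list \<times> (nat \<times> nat \<Rightarrow> nat)" where
  "rsk_step PS a = (case PS of (P, S) \<Rightarrow>
     let nu = map length P; i = insertion_row a P
     in (row_insert a P, S((i, row_length nu i) := Suc (sum_list nu))))"

definition rsk :: "nat list \<Rightarrow> nat list list \<times> (nat \<times> nat \<Rightarrow> nat)" where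
  "rsk w = foldl rsk_step ([], \<lambda>_. 0) w"

lemma rsk_Nil [simp]: "rsk [] = ([], \<lambda>_. 0)"
  by (simp add: rsk_def)

lemma rsk_snoc: "rsk (w @ [a]) = rsk_step (rsk w) a"
  by (simp add: rsk_def)

lemma rsk_invariant:
  "rsk w = (P, S) \<Longrightarrow> ssyt_rows P \<and> mset (concat P) = mset w \<and> syt (map length P) S"
proof (induction w arbitrary: P S rule: rev_induct)
  case Nil
  then show ?case by (auto simp: syt_def ssyt_def cells_def)
next
  case (snoc a w)
  obtain P0 S0 where w: "rsk w = (P0, S0)" by (cases "rsk w")
  have IH: "ssyt_rows P0" "mset (concat P0) = mset w" "syt (map length P0) S0"
    using snoc.IH[OF w] by auto
  have "syt (map length (row_insert a P0))
      (S0((insertion_row a P0, row_length (map length P0) (insertion_row a P0))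
         := Suc (sum_list (map length P0))))"
    using syt_add_cell[OF IH(3) ssyt_rows_shape[OF IH(1)]] insertion_row_le[of a P0]
    by (simp add: shape_row_insert)
  then show ?case
    using snoc.prems w IH ssyt_rows_row_insert[OF IH(1)]
    by (auto simp: rsk_snoc rsk_step_def Let_def mset_row_insert)
qed

lemma length_rsk: "rsk w = (P, S) \<Longrightarrow> sum_list (map length P) = length w"
  using rsk_invariant[of w P S] by (metis length_concat size_mset)

lemma rsk_snoc_new_cell:
  fixes a :: nat
  assumes "rsk w = (P, S)"
  defines "i \<equiv> insertion_row a P"
  shows "rsk (w @ [a]) = (row_insert a P, S((i, row_length (map length P) i) := Suc (length w)))"
  using assms length_rsk[OF assms(1)] by (simp add: rsk_snoc rsk_step_def Let_def)

lemma rsk_snoc_max_iff: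
  fixes a :: nat
  assumes "rsk w = (P, S)"
  defines "i \<equiv> insertion_row a P"
  shows "snd (rsk (w @ [a])) x = Suc (length w) \<longleftrightarrow> x = (i, row_length (map length P) i)"
proof -
  have "S x \<le> length w"
    using syt_le[of _ S x] rsk_invariant[OF assms(1)] length_rsk[OF assms(1)] by metis
  then show ?thesis using rsk_snoc_new_cell[OF assms(1)] by (auto simp: i_def)
qed

lemma insertion_row_row_insert_less_iff:
  "ssyt_rows P \<Longrightarrow> insertion_row x P < insertion_row x' (row_insert x P) \<longleftrightarrow> x' < x"
  using insertion_row_row_insert_le[of P x x'] insertion_row_row_insert_gt[of P x' x] by force

lemma word_Des_snoc:
  "w \<noteq> [] \<Longrightarrow> word_Des (w @ [a]) = word_Des w \<union> {j. j = length w \<and> a < last w}"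
  unfolding word_Des_def
  by (auto simp: nth_append last_conv_nth less_Suc_eq le_neq_implies_less split: if_splits)

lemma syt_Des_rsk: "rsk w = (P, S) \<Longrightarrow> syt_Des (map length P) S = word_Des w"
proof (induction w arbitrary: P S rule: rev_induct)
  case Nil
  then show ?case by (auto simp: syt_Des_def word_Des_def)
next
  case (snoc a w)
  obtain P0 S0 where w: "rsk w = (P0, S0)" by (cases "rsk w")
  let ?i = "insertion_row a P0"
  have inv: "ssyt_rows P0" "syt (map length P0) S0" using rsk_invariant[OF w] by auto
  have PS: "P = row_insert a P0" "S = S0((?i, row_length (map length P0) ?i) := Suc (length w))"
    using snoc.prems rsk_snoc_new_cell[OF w] by auto
  have "syt_Des (map length P) S = word_Des w \<union>
      {j. j = length w \<and> 1 \<le> j \<and> (\<exists>x\<in>cells (map length P0). S0 x = j \<and> fst x < ?i)}"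
    using syt_Des_add_cell[OF inv(2), of ?i] insertion_row_le[of a P0]
      snoc.IH[OF w] length_rsk[OF w]
    by (simp add: PS shape_row_insert)
  also have "\<dots> = word_Des (w @ [a])"
  proof (cases w rule: rev_exhaust)
    case (snoc u b)
    obtain Pu Su where u: "rsk u = (Pu, Su)" by (cases "rsk u")
    let ?ib = "insertion_row b Pu"
    have P0: "P0 = row_insert b Pu" using rsk_snoc_new_cell[OF u] w snoc by simp
    have S0: "S0 x = length w \<longleftrightarrow> x = (?ib, row_length (map length Pu) ?ib)" for x
      using rsk_snoc_max_iff[OF u, of b x] w snoc by simp
    have "(?ib, row_length (map length Pu) ?ib) \<in> cells (map length P0)"
      using P0 insertion_row_le[of b Pu] by (simp add: shape_row_insert cells_add_cell)
    then have "(\<exists>x\<in>cells (map length P0). S0 x = length w \<and> fst x < ?i) \<longleftrightarrow> ?ib < ?i"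
      using S0 by auto
    also have "\<dots> \<longleftrightarrow> a < b"
      using insertion_row_row_insert_less_iff[OF rsk_invariant[OF u, THEN conjunct1]] P0 by simp
    finally show ?thesis using word_Des_snoc[of w a] snoc by auto
  qed (auto simp: word_Des_def)
  finally show ?case .
qed

lemma rsk_snoc_restore:
  assumes "rsk w = (P, S)"
  shows "S = (snd (rsk (w @ [a])))((insertion_row a P, row_length (map length P) (insertion_row a P)) := 0)"
proof -
  have "ssyt (map length P) S" using rsk_invariant[OF assms] by (simp add: syt_def)
  then have "S (insertion_row a P, row_length (map length P) (insertion_row a P)) = 0"
    by (rule ssyt_zero_outside) (rule new_cell_notin_cells)
  then show ?thesis using rsk_snoc_new_cell[OF assms] by auto
qed

lemma inj_rsk: "inj rsk"
proof (rule injI)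
  fix w1 w2 :: "nat list"
  show "rsk w1 = rsk w2 \<Longrightarrow> w1 = w2"
  proof (induction w1 arbitrary: w2 rule: rev_induct)
    case Nil
    then show ?case using length_rsk[of w2 "[]" "\<lambda>_. 0"] by simp
  next
    case (snoc a1 u1)
    obtain P S where PS: "rsk (u1 @ [a1]) = (P, S)" by (cases "rsk (u1 @ [a1])")
    then have "length w2 = Suc (length u1)"
      using length_rsk[OF PS] length_rsk[of w2 P S] snoc.prems by simp
    then obtain u2 a2 where w2: "w2 = u2 @ [a2]" and len: "length u1 = length u2"
      by (cases w2 rule: rev_exhaust) auto
    obtain P1 S1 where u1: "rsk u1 = (P1, S1)" by (cases "rsk u1")
    obtain P2 S2 where u2: "rsk u2 = (P2, S2)" by (cases "rsk u2")
    let ?i1 = "insertion_row a1 P1" and ?i2 = "insertion_row a2 P2"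
    have cell: "(?i1, row_length (map length P1) ?i1) = (?i2, row_length (map length P2) ?i2)"
      using rsk_snoc_max_iff[OF u1, of a1] rsk_snoc_max_iff[OF u2, of a2] snoc.prems w2 len by metis
    have "(P1, a1) = reverse_insert (row_insert a1 P1) ?i1"
      using reverse_insert_row_insert rsk_invariant[OF u1] by simp
    also have "\<dots> = reverse_insert (row_insert a2 P2) ?i2"
      using cell snoc.prems w2 rsk_snoc_new_cell[OF u1] rsk_snoc_new_cell[OF u2] by simp
    also have "\<dots> = (P2, a2)"
      using reverse_insert_row_insert rsk_invariant[OF u2] by simp
    finally have "P1 = P2" "a1 = a2" by simp_all
    moreover have "S1 = S2"
      using rsk_snoc_restore[OF u1, of a1] rsk_snoc_restore[OF u2, of a2] cell snoc.prems w2 by simp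
    ultimately show ?case using snoc.IH[of u2] u1 u2 w2 by simp
  qed
qed

lemma rsk_surj: "ssyt_rows P \<Longrightarrow> syt (map length P) S \<Longrightarrow> \<exists>w. rsk w = (P, S)"
proof (induction "sum_list (map length P)" arbitrary: P S)
  case 0
  then have "P = []" by (cases P) (auto simp: ssyt_rows_Cons)
  moreover have "S = (\<lambda>_. 0)"
    using 0 \<open>P = []\<close> ssyt_zero_outside[of "[]" S] by (auto simp: syt_def cells_def)
  ultimately show ?case by (intro exI[of _ "[]"]) simp
next
  case (Suc m)
  let ?nu = "map length P"
  txt \<open>The largest entry of \<open>S\<close> sits in a corner, and reverse insertion from that corner
    undoes the last insertion step.\<close>
  obtain i c where x: "(i, c) \<in> cells ?nu" "S (i, c) = Suc m"
    using syt_surj[OF Suc.prems(2), of "Suc m"] Suc.hyps(2) by auto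
  have corner: "corner ?nu i" and c: "Suc c = ?nu ! i"
    using max_entry_corner[OF Suc.prems(2) x(1)] x(2) Suc.hyps(2) by auto
  obtain P' a where rv: "reverse_insert P i = (P', a)" by (cases "reverse_insert P i")
  have P': "ssyt_rows P'" "row_insert a P' = P" "insertion_row a P' = i"
    using row_insert_reverse_insert[OF Suc.prems(1) corner rv] by auto
  let ?nu' = "map length P'"
  have shape: "?nu = add_cell ?nu' i" and i: "i \<le> length ?nu'"
    using shape_row_insert[of a P'] insertion_row_le[of a P'] P' by auto
  have "row_length ?nu' i = c" using nth_add_cell[OF i] shape c by simp
  then have "syt ?nu' (S((i, c) := 0))" "m = sum_list ?nu'"
    using syt_remove_max[OF _ ssyt_rows_shape[OF P'(1)] i] Suc.prems(2) Suc.hyps(2) x(2) shape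
      sum_list_add_cell[OF i]
    by auto
  then obtain w where w: "rsk w = (P', S((i, c) := 0))" using Suc.hyps(1) P'(1) by blast
  have "rsk (w @ [a]) = (P, S)"
    using rsk_snoc_new_cell[OF w, of a] P' \<open>row_length ?nu' i = c\<close> length_rsk[OF w]
      \<open>m = sum_list ?nu'\<close> x(2) by auto
  then show ?case by blast
qed

definition rs_pairs :: "nat multiset \<Rightarrow> (nat list list \<times> (nat \<times> nat \<Rightarrow> nat)) set" where
  "rs_pairs M = {(P, S). ssyt_rows P \<and> mset (concat P) = M \<and> syt (map length P) S}"

lemma bij_betw_rsk: "bij_betw rsk {w. mset w = M} (rs_pairs M)"
proof (rule bij_betw_imageI)
  show "inj_on rsk {w. mset w = M}" using inj_rsk by (rule inj_on_subset) simp
  show "rsk ` {w. mset w = M} = rs_pairs M"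
  proof (intro set_eqI iffI)
    fix PS assume "PS \<in> rsk ` {w. mset w = M}"
    then show "PS \<in> rs_pairs M" using rsk_invariant by (force simp: rs_pairs_def)
  next
    fix PS assume "PS \<in> rs_pairs M"
    then obtain P S where PS: "PS = (P, S)" "ssyt_rows P" "mset (concat P) = M" "syt (map length P) S"
      by (auto simp: rs_pairs_def)
    then obtain w where "rsk w = (P, S)" using rsk_surj by blast
    then show "PS \<in> rsk ` {w. mset w = M}" using PS rsk_invariant[of w P S] by force
  qed
qed


section \<open>Standardization\<close>

definition std_less :: "(nat \<times> nat \<Rightarrow> nat) \<Rightarrow> nat \<times> nat \<Rightarrow> nat \<times> nat \<Rightarrow> bool" where
  "std_less T y x \<longleftrightarrow> T y < T x \<or> (T y = T x \<and> snd y < snd x)"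

lemma standardize_eq:
  "standardize nu T x = (if x \<in> cells nu then Suc (card {y \<in> cells nu. std_less T y x}) else 0)"
  by (simp add: standardize_def std_less_def)

lemma std_less_irrefl: "\<not> std_less T x x"
  by (simp add: std_less_def)

lemma std_less_trans: "std_less T x y \<Longrightarrow> std_less T y z \<Longrightarrow> std_less T x z"
  by (auto simp: std_less_def)

lemma ssyt_col_less:
  assumes T: "ssyt nu T" and nu: "sorted_wrt (\<ge>) nu"
  shows "(r', c) \<in> cells nu \<Longrightarrow> r < r' \<Longrightarrow> T (r, c) < T (r', c)"
proof (induction r')
  case (Suc k)
  have "T (k, c) < T (Suc k, c)" using T Suc.prems(1) by (simp add: ssyt_def)
  moreover have "r < k \<Longrightarrow> T (r, c) < T (k, c)"
    using Suc.IH cells_downward_closed[OF nu Suc.prems(1), of k c] by simp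
  ultimately show ?case using Suc.prems(2) by (cases "r < k") (auto simp: less_Suc_eq)
qed simp

lemma ssyt_row_le:
  assumes T: "ssyt nu T"
  shows "(r, c') \<in> cells nu \<Longrightarrow> c \<le> c' \<Longrightarrow> T (r, c) \<le> T (r, c')"
proof (induction c')
  case (Suc k)
  have "T (r, k) \<le> T (r, Suc k)" using T Suc.prems(1) by (simp add: ssyt_def)
  moreover have "c \<le> k \<Longrightarrow> T (r, c) \<le> T (r, k)"
    using Suc.IH Suc.prems(1) by (simp add: cells_def)
  ultimately show ?case using Suc.prems(2) by (cases "c \<le> k") (auto simp: le_Suc_eq)
qed simp

lemma ssyt_mono:
  assumes T: "ssyt nu T" and nu: "sorted_wrt (\<ge>) nu" and y: "y \<in> cells nu"
    and le: "fst x \<le> fst y" "snd x \<le> snd y"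
  shows "T x \<le> T y"
proof -
  have z: "(fst x, snd y) \<in> cells nu" using cells_downward_closed[OF nu, of "fst y" "snd y"] y le by simp
  have "T x \<le> T (fst x, snd y)" using ssyt_row_le[OF T z, of "snd x"] le by simp
  also have "\<dots> \<le> T y"
    using ssyt_col_less[OF T nu, of "fst y" "snd y" "fst x"] y le by (cases "fst x < fst y") auto
  finally show ?thesis .
qed

lemma std_less_total:
  assumes T: "ssyt nu T" and nu: "sorted_wrt (\<ge>) nu"
    and x: "x \<in> cells nu" and y: "y \<in> cells nu" and "x \<noteq> y"
  shows "std_less T x y \<or> std_less T y x"
proof (rule ccontr)
  assume "\<not> (std_less T x y \<or> std_less T y x)"
  then have e: "T x = T y" "snd x = snd y" by (auto simp: std_less_def)
  then obtain r r' c where xy: "x = (r, c)" "y = (r', c)" "r \<noteq> r'"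
    using \<open>x \<noteq> y\<close> by (cases x, cases y) auto
  then show False using ssyt_col_less[OF T nu, of r' c r] ssyt_col_less[OF T nu, of r c r'] x y e(1)
    by (cases "r < r'") auto
qed

lemma ssyt_horizontal_strip:
  assumes T: "ssyt nu T" and nu: "sorted_wrt (\<ge>) nu" and x: "x \<in> cells nu" and y: "y \<in> cells nu"
    and "T y = T x" and "snd y < snd x"
  shows "fst x \<le> fst y"
proof (rule ccontr)
  assume "\<not> fst x \<le> fst y"
  then have z: "(fst y, snd x) \<in> cells nu"
    using cells_downward_closed[OF nu, of "fst x" "snd x"] x by simp
  have "T (fst y, snd x) < T x"
    using ssyt_col_less[OF T nu, of "fst x" "snd x" "fst y"] x \<open>\<not> fst x \<le> fst y\<close> by simp
  moreover have "T y \<le> T (fst y, snd x)"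
    using ssyt_row_le[OF T z, of "snd y"] \<open>snd y < snd x\<close> by (cases y) simp
  ultimately show False using \<open>T y = T x\<close> by simp
qed

lemma standardize_less:
  assumes x: "x \<in> cells nu" and y: "y \<in> cells nu" and "std_less T y x"
  shows "standardize nu T y < standardize nu T x"
proof -
  have "{z \<in> cells nu. std_less T z y} \<subset> {z \<in> cells nu. std_less T z x}"
    using assms std_less_trans[of T _ y x] std_less_irrefl[of T y] by blast
  then have "card {z \<in> cells nu. std_less T z y} < card {z \<in> cells nu. std_less T z x}"
    by (rule psubset_card_mono[rotated]) simp
  then show ?thesis using x y by (simp add: standardize_eq)
qed

lemma standardize_less_iff:
  assumes T: "ssyt nu T" and nu: "sorted_wrt (\<ge>) nu" and x: "x \<in> cells nu" and y: "y \<in> cells nu"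
  shows "standardize nu T y < standardize nu T x \<longleftrightarrow> std_less T y x"
  using std_less_total[OF T nu x y] standardize_less[OF x y, of T] standardize_less[OF y x, of T]
    std_less_irrefl[of T x]
  by (cases "x = y") auto

lemma standardize_image:
  assumes T: "ssyt nu T" and nu: "sorted_wrt (\<ge>) nu"
  shows "standardize nu T ` cells nu = {1..sum_list nu}"
proof (rule card_subset_eq)
  let ?S = "standardize nu T"
  show "?S ` cells nu \<subseteq> {1..sum_list nu}"
  proof
    fix v assume "v \<in> ?S ` cells nu"
    then obtain x where x: "x \<in> cells nu" "v = ?S x" by blast
    have "{y \<in> cells nu. std_less T y x} \<subset> cells nu" using x std_less_irrefl[of T x] by blast
    then have "card {y \<in> cells nu. std_less T y x} < card (cells nu)"
      by (rule psubset_card_mono[rotated]) simp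
    then show "v \<in> {1..sum_list nu}" using x by (simp add: standardize_eq card_cells)
  qed
  have "inj_on ?S (cells nu)"
    by (rule inj_onI) (metis standardize_less std_less_total[OF T nu] less_irrefl)
  then show "card (?S ` cells nu) = card {1..sum_list nu}"
    by (simp add: card_image card_cells)
qed simp

lemma syt_standardize:
  assumes T: "ssyt nu T" and nu: "sorted_wrt (\<ge>) nu"
  shows "syt nu (standardize nu T)"
proof -
  let ?S = "standardize nu T"
  have "ssyt nu ?S"
    unfolding ssyt_def
  proof (intro conjI allI impI ballI)
    fix r c assume rc: "(r, Suc c) \<in> cells nu"
    have "std_less T (r, c) (r, Suc c)" using T rc by (auto simp: std_less_def ssyt_def le_less)
    moreover have "(r, c) \<in> cells nu" using rc by (auto simp: cells_def)
    ultimately show "?S (r, c) \<le> ?S (r, Suc c)" using standardize_less[OF rc] by fastforce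
  next
    fix r c assume rc: "(Suc r, c) \<in> cells nu"
    have "std_less T (r, c) (Suc r, c)" using T rc by (auto simp: std_less_def ssyt_def)
    moreover have "(r, c) \<in> cells nu" using cells_downward_closed[OF nu rc] by simp
    ultimately show "?S (r, c) < ?S (Suc r, c)" using standardize_less[OF rc] by blast
  qed (simp_all add: standardize_eq)
  then show ?thesis using standardize_image[OF T nu] by (simp add: syt_def)
qed

definition des_before :: "nat list \<Rightarrow> (nat \<times> nat \<Rightarrow> nat) \<Rightarrow> nat \<Rightarrow> nat" where
  "des_before nu S k = card {i \<in> syt_Des nu S. i < k}"

lemma finite_des_before_set: "finite {i \<in> syt_Des nu S. i < k}"
  by (rule finite_subset[of _ "{..<k}"]) auto

lemma des_before_Suc:
  "des_before nu S (Suc k) = (if k \<in> syt_Des nu S then Suc (des_before nu S k) else des_before nu S k)"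
proof -
  have "{i \<in> syt_Des nu S. i < Suc k} =
      (if k \<in> syt_Des nu S then insert k {i \<in> syt_Des nu S. i < k} else {i \<in> syt_Des nu S. i < k})"
    by (auto simp: less_Suc_eq)
  then show ?thesis by (simp add: des_before_def finite_des_before_set)
qed

lemma des_before_one: "des_before nu S (Suc 0) = 0"
  by (simp add: des_before_def syt_Des_def)

lemma des_before_mono: "k \<le> k' \<Longrightarrow> des_before nu S k \<le> des_before nu S k'"
  unfolding des_before_def by (intro card_mono finite_des_before_set) auto

lemma des_before_strict_mono:
  assumes "j \<in> syt_Des nu S" "k \<le> j" "j < k'"
  shows "des_before nu S k < des_before nu S k'"
  unfolding des_before_def
proof (intro psubset_card_mono finite_des_before_set psubsetI)
  show "{i \<in> syt_Des nu S. i < k} \<subseteq> {i \<in> syt_Des nu S. i < k'}" using assms by auto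
  have "j \<in> {i \<in> syt_Des nu S. i < k'}" "j \<notin> {i \<in> syt_Des nu S. i < k}" using assms by auto
  then show "{i \<in> syt_Des nu S. i < k} \<noteq> {i \<in> syt_Des nu S. i < k'}" by blast
qed

lemma syt_no_descent_step:
  assumes S: "syt nu S" and nu: "sorted_wrt (\<ge>) nu" and x: "x \<in> cells nu" and y: "y \<in> cells nu"
    and succ: "S y = Suc (S x)" and "S x \<notin> syt_Des nu S"
  shows "fst y \<le> fst x" "snd x < snd y"
proof -
  show row: "fst y \<le> fst x"
  proof (rule ccontr)
    assume "\<not> fst y \<le> fst x"
    then have "S x \<in> syt_Des nu S"
      unfolding syt_Des_def using x y succ syt_pos[OF S x]
      by (intro CollectI conjI bexI[of _ x] bexI[of _ y]) auto
    with \<open>S x \<notin> syt_Des nu S\<close> show False ..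
  qed
  show "snd x < snd y"
  proof (rule ccontr)
    assume "\<not> snd x < snd y"
    then have "S y \<le> S x"
      using ssyt_mono[OF _ nu x, of S y] S row by (simp add: syt_def)
    then show False using succ by simp
  qed
qed

lemma syt_no_descent_run:
  assumes S: "syt nu S" and nu: "sorted_wrt (\<ge>) nu"
  shows "x \<in> cells nu \<Longrightarrow> y \<in> cells nu \<Longrightarrow> S y = S x + l \<Longrightarrow>
    (\<forall>j. S x \<le> j \<and> j < S x + l \<longrightarrow> j \<notin> syt_Des nu S) \<Longrightarrow>
    fst y \<le> fst x \<and> (0 < l \<longrightarrow> snd x < snd y)"
proof (induction l arbitrary: y)
  case 0
  then have "x = y" by (intro inj_onD[OF syt_inj[OF S]]) simp_all
  then show ?case by simp
next
  case (Suc l)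
  have "1 \<le> S x + l" using syt_pos[OF S Suc.prems(1)] by simp
  moreover have "S x + l \<le> sum_list nu" using syt_le[OF S, of y] Suc.prems(3) by simp
  ultimately obtain z where z: "z \<in> cells nu" "S z = S x + l" using syt_surj[OF S] by blast
  have "S z \<notin> syt_Des nu S" using Suc.prems(4) z(2) by auto
  then have y: "fst y \<le> fst z" "snd z < snd y"
    using syt_no_descent_step[OF S nu z(1) Suc.prems(2)] Suc.prems(3) z(2) by simp_all
  show ?case
  proof (cases "l = 0")
    case True
    then have "z = x" using z Suc.prems(1) by (intro inj_onD[OF syt_inj[OF S]]) simp_all
    then show ?thesis using y by simp
  next
    case False
    then have "fst z \<le> fst x" "snd x < snd z"
      using Suc.IH[OF Suc.prems(1) z] Suc.prems(4) by simp_all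
    then show ?thesis using y by simp
  qed
qed

definition destandardize :: "nat list \<Rightarrow> (nat \<times> nat \<Rightarrow> nat) \<Rightarrow> nat \<times> nat \<Rightarrow> nat" where
  "destandardize nu S x = (if x \<in> cells nu then Suc (des_before nu S (S x)) else 0)"

lemma std_less_destandardize:
  assumes S: "syt nu S" and nu: "sorted_wrt (\<ge>) nu" and x: "x \<in> cells nu" and y: "y \<in> cells nu"
    and less: "S y < S x"
  shows "std_less (destandardize nu S) y x"
proof (cases "des_before nu S (S y) = des_before nu S (S x)")
  case True
  have "j \<notin> syt_Des nu S" if "S y \<le> j" "j < S y + (S x - S y)" for j
    using des_before_strict_mono[of j nu S "S y" "S x"] that True less by auto
  then have "snd y < snd x" using syt_no_descent_run[OF S nu y x, of "S x - S y"] less by simp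
  then show ?thesis using True x y by (simp add: std_less_def destandardize_def)
next
  case False
  then show ?thesis
    using des_before_mono[of "S y" "S x" nu S] less x y by (simp add: std_less_def destandardize_def)
qed

lemma std_less_destandardize_iff:
  assumes S: "syt nu S" and nu: "sorted_wrt (\<ge>) nu" and x: "x \<in> cells nu" and y: "y \<in> cells nu"
  shows "std_less (destandardize nu S) y x \<longleftrightarrow> S y < S x"
proof
  assume yx: "std_less (destandardize nu S) y x"
  show "S y < S x"
  proof (rule ccontr)
    assume "\<not> S y < S x"
    moreover have "x \<noteq> y" using yx std_less_irrefl by blast
    then have "S x \<noteq> S y" using inj_onD[OF syt_inj[OF S] _ x y] by blast
    ultimately have "std_less (destandardize nu S) x y"
      using std_less_destandardize[OF S nu y x] by simp
    then show False using yx std_less_trans std_less_irrefl by blast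
  qed
qed (rule std_less_destandardize[OF S nu x y])

lemma ssyt_destandardize:
  assumes S: "syt nu S" and nu: "sorted_wrt (\<ge>) nu"
  shows "ssyt nu (destandardize nu S)"
  unfolding ssyt_def
proof (intro conjI allI impI ballI)
  let ?T = "destandardize nu S"
  fix r c assume rc: "(r, Suc c) \<in> cells nu"
  then have "(r, c) \<in> cells nu" by (auto simp: cells_def)
  moreover have "S (r, c) \<le> S (r, Suc c)" using S rc by (simp add: syt_def ssyt_def)
  ultimately show "?T (r, c) \<le> ?T (r, Suc c)"
    using rc des_before_mono by (simp add: destandardize_def)
next
  let ?T = "destandardize nu S"
  fix r c assume rc: "(Suc r, c) \<in> cells nu"
  have "S (r, c) < S (Suc r, c)" using S rc by (simp add: syt_def ssyt_def)
  then have "std_less ?T (r, c) (Suc r, c)"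
    using std_less_destandardize[OF S nu rc] cells_downward_closed[OF nu rc, of r c] by simp
  then show "?T (r, c) < ?T (Suc r, c)" by (simp add: std_less_def)
qed (simp_all add: destandardize_def)

lemma qyt_destandardize:
  assumes S: "syt nu S" and nu: "sorted_wrt (\<ge>) nu"
  shows "qyt nu (destandardize nu S)"
  unfolding qyt_def
proof (intro conjI allI impI ssyt_destandardize[OF S nu])
  let ?T = "destandardize nu S"
  fix i assume i: "2 \<le> i" "\<exists>x\<in>cells nu. ?T x = i"
  then obtain x where x: "x \<in> cells nu" "?T x = i" by blast
  let ?D = "{j \<in> syt_Des nu S. j < S x}"
  have card: "card ?D = i - 1" using x by (simp add: destandardize_def des_before_def)
  then have "card ?D \<noteq> 0" using i by simp
  then have "?D \<noteq> {}" by (metis card.empty)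
  txt \<open>The largest descent \<open>j < S x\<close> of \<open>S\<close> is witnessed by cells with entries \<open>i - 1\<close> and \<open>i\<close>.\<close>
  define j where "j = Max ?D"
  have j: "j \<in> ?D" "\<And>k. k \<in> ?D \<Longrightarrow> k \<le> j"
    using Max_in[OF finite_des_before_set \<open>?D \<noteq> {}\<close>] Max_ge[OF finite_des_before_set]
    by (simp_all add: j_def)
  obtain a b where ab: "a \<in> cells nu" "b \<in> cells nu" "S a = j" "S b = Suc j" "fst a < fst b"
    using j(1) unfolding syt_Des_def by blast
  have "{k \<in> syt_Des nu S. k < Suc j} = ?D" using j by (auto simp: less_Suc_eq_le)
  then have "des_before nu S (Suc j) = i - 1" "des_before nu S j = i - 2"
    using card des_before_Suc[of nu S j] j(1) by (simp_all add: des_before_def)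
  then have "?T b = i" "?T a = i - 1" using ab i by (simp_all add: destandardize_def)
  then show "\<exists>x\<in>cells nu. \<exists>y\<in>cells nu. ?T x = i \<and> ?T y = i - 1 \<and> fst x > fst y"
    using ab by blast
qed

lemma syt_card_less:
  assumes S: "syt nu S" and x: "x \<in> cells nu"
  shows "card {y \<in> cells nu. S y < S x} = S x - 1"
proof -
  have "S ` {y \<in> cells nu. S y < S x} = {1..<S x}"
  proof (intro set_eqI iffI)
    fix v assume "v \<in> {1..<S x}"
    then obtain y where "y \<in> cells nu" "S y = v"
      using syt_surj[OF S, of v] syt_le[OF S, of x] by auto
    then show "v \<in> S ` {y \<in> cells nu. S y < S x}" using \<open>v \<in> {1..<S x}\<close> by auto
  qed (use syt_pos[OF S] in auto)
  moreover have "inj_on S {y \<in> cells nu. S y < S x}"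
    using syt_inj[OF S] by (rule inj_on_subset) auto
  ultimately show ?thesis using card_image by fastforce
qed

lemma standardize_destandardize:
  assumes S: "syt nu S" and nu: "sorted_wrt (\<ge>) nu"
  shows "standardize nu (destandardize nu S) = S"
proof
  fix x
  show "standardize nu (destandardize nu S) x = S x"
  proof (cases "x \<in> cells nu")
    case True
    have "{y \<in> cells nu. std_less (destandardize nu S) y x} = {y \<in> cells nu. S y < S x}"
      using std_less_destandardize_iff[OF S nu True] by auto
    then show ?thesis
      using True syt_card_less[OF S True] syt_pos[OF S True] by (simp add: standardize_eq)
  next
    case False
    then show ?thesis using S ssyt_zero_outside[of nu S x] by (simp add: standardize_eq syt_def)
  qed
qed

lemma standardize_equal_entries:
  assumes T: "ssyt nu T" and nu: "sorted_wrt (\<ge>) nu" and a: "a \<in> cells nu" and b: "b \<in> cells nu"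
    and "T a = T b" and "standardize nu T a \<le> standardize nu T b"
  shows "fst b \<le> fst a"
proof (cases "a = b")
  case False
  then have "standardize nu T a \<noteq> standardize nu T b"
    using inj_onD[OF syt_inj[OF syt_standardize[OF T nu]] _ a b] by blast
  then have "std_less T a b"
    using standardize_less_iff[OF T nu b a] assms(6) by simp
  then show ?thesis
    using ssyt_horizontal_strip[OF T nu b a] \<open>T a = T b\<close> by (simp add: std_less_def)
qed simp

lemma qyt_standardize_eq_one:
  assumes Q: "qyt nu T" and nu: "sorted_wrt (\<ge>) nu" and x: "x \<in> cells nu"
    and "standardize nu T x = 1"
  shows "T x = 1"
proof (rule ccontr)
  have T: "ssyt nu T" using Q by (simp add: qyt_def)
  assume "T x \<noteq> 1"
  then have "2 \<le> T x" using ssyt_pos[OF T x] by simp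
  then obtain a where a: "a \<in> cells nu" "T a = T x - 1"
    using Q x unfolding qyt_def by blast
  then have "standardize nu T a < standardize nu T x"
    using standardize_less_iff[OF T nu x a(1)] a(2) \<open>2 \<le> T x\<close> by (simp add: std_less_def)
  then show False
    using syt_pos[OF syt_standardize[OF T nu] a(1)] \<open>standardize nu T x = 1\<close> by simp
qed

lemma standardize_equal_entries_no_descent:
  assumes T: "ssyt nu T" and nu: "sorted_wrt (\<ge>) nu" and x: "x \<in> cells nu" and y: "y \<in> cells nu"
    and Sy: "standardize nu T y = k" and Sx: "standardize nu T x = Suc k" and "T y = T x"
  shows "k \<notin> syt_Des nu (standardize nu T)"
proof
  let ?S = "standardize nu T"
  assume "k \<in> syt_Des nu ?S"
  then obtain a b where ab: "a \<in> cells nu" "b \<in> cells nu" "?S a = k" "?S b = Suc k" "fst a < fst b"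
    unfolding syt_Des_def by blast
  then have "a = y" "b = x"
    using inj_onD[OF syt_inj[OF syt_standardize[OF T nu]]] x y Sx Sy by metis+
  then show False
    using standardize_equal_entries[OF T nu y x \<open>T y = T x\<close>] ab Sx Sy by simp
qed

lemma qyt_standardize_step:
  assumes Q: "qyt nu T" and nu: "sorted_wrt (\<ge>) nu" and x: "x \<in> cells nu" and y: "y \<in> cells nu"
    and Sy: "standardize nu T y = k" and Sx: "standardize nu T x = Suc k"
  shows "T x = (if k \<in> syt_Des nu (standardize nu T) then Suc (T y) else T y)"
proof -
  have T: "ssyt nu T" using Q by (simp add: qyt_def)
  let ?S = "standardize nu T"
  have S: "syt nu ?S" by (rule syt_standardize[OF T nu])
  have less: "?S z < ?S z' \<longleftrightarrow> std_less T z z'" if "z \<in> cells nu" "z' \<in> cells nu" for z z'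
    using standardize_less_iff[OF T nu that(2,1)] .
  have "std_less T y x" using less[OF y x] Sx Sy by simp
  then consider "T y = T x" | "T y < T x" by (auto simp: std_less_def)
  then show ?thesis
  proof cases
    case 1
    then show ?thesis using standardize_equal_entries_no_descent[OF T nu x y Sy Sx] by simp
  next
    case 2
    have gap: "\<not> (T y < T z \<and> T z < T x)" if "z \<in> cells nu" for z
      using less[OF y that] less[OF that x] Sx Sy by (auto simp: std_less_def)
    txt \<open>The entry \<open>T x - 1\<close> occurs below an occurrence of \<open>T x\<close>; no entry lies strictly
      between \<open>T y\<close> and \<open>T x\<close>, so it equals \<open>T y\<close>, and the horizontal strip property moves
      the two witnesses to \<open>y\<close> and \<open>x\<close>.\<close>
    have "2 \<le> T x" using 2 ssyt_pos[OF T y] by simp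
    then obtain b a where ab: "b \<in> cells nu" "a \<in> cells nu" "T b = T x" "T a = T x - 1" "fst a < fst b"
      using Q x unfolding qyt_def by blast
    have Ta: "T a = T y" using gap[OF ab(2)] ab(4) 2 by simp
    have "?S y < ?S b" using less[OF y ab(1)] ab(3) 2 by (simp add: std_less_def)
    then have "fst b \<le> fst x"
      using standardize_equal_entries[OF T nu x ab(1)] ab(3) Sx Sy by simp
    moreover have "?S a < ?S x" using less[OF ab(2) x] ab(4) \<open>2 \<le> T x\<close> by (simp add: std_less_def)
    then have "fst y \<le> fst a"
      using standardize_equal_entries[OF T nu ab(2) y] Ta Sx Sy by simp
    moreover have "1 \<le> k" using syt_pos[OF S y] Sy by simp
    ultimately have "k \<in> syt_Des nu ?S"
      unfolding syt_Des_def using x y Sx Sy ab(5)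
      by (intro CollectI conjI bexI[of _ y] bexI[of _ x]) auto
    then show ?thesis using Ta ab(4) \<open>2 \<le> T x\<close> by simp
  qed
qed

lemma destandardize_standardize:
  assumes Q: "qyt nu T" and nu: "sorted_wrt (\<ge>) nu"
  shows "destandardize nu (standardize nu T) = T"
proof
  have T: "ssyt nu T" using Q by (simp add: qyt_def)
  let ?S = "standardize nu T"
  have S: "syt nu ?S" by (rule syt_standardize[OF T nu])
  have entry: "\<forall>x\<in>cells nu. ?S x = k \<longrightarrow> T x = Suc (des_before nu ?S k)" for k
  proof (induction k)
    case 0
    then show ?case using syt_pos[OF S] by fastforce
  next
    case (Suc k)
    show ?case
    proof (intro ballI impI)
      fix x assume x: "x \<in> cells nu" and Sx: "?S x = Suc k"
      show "T x = Suc (des_before nu ?S (Suc k))"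
      proof (cases "k = 0")
        case True
        then show ?thesis using qyt_standardize_eq_one[OF Q nu x] Sx des_before_one by simp
      next
        case False
        then obtain y where y: "y \<in> cells nu" "?S y = k"
          using syt_surj[OF S, of k] syt_le[OF S, of x] Sx by auto
        then show ?thesis
          using qyt_standardize_step[OF Q nu x y(1) y(2) Sx] Suc.IH des_before_Suc by simp
      qed
    qed
  qed
  fix x
  show "destandardize nu ?S x = T x"
    using entry[of "?S x"] ssyt_zero_outside[OF T, of x] by (simp add: destandardize_def)
qed

lemma bij_betw_standardize:
  assumes nu: "sorted_wrt (\<ge>) nu"
  shows "bij_betw (standardize nu) (QYT nu) {S. syt nu S}"
proof (rule bij_betw_byWitness[where f' = "destandardize nu"])
  show "\<forall>T\<in>QYT nu. destandardize nu (standardize nu T) = T"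
    using destandardize_standardize[OF _ nu] by (simp add: QYT_def)
  show "\<forall>S\<in>{S. syt nu S}. standardize nu (destandardize nu S) = S"
    using standardize_destandardize[OF _ nu] by simp
  show "standardize nu ` QYT nu \<subseteq> {S. syt nu S}"
    using syt_standardize[OF _ nu] by (auto simp: QYT_def qyt_def)
  show "destandardize nu ` {S. syt nu S} \<subseteq> QYT nu"
    using qyt_destandardize[OF _ nu] by (auto simp: QYT_def)
qed


section \<open>Kostka numbers\<close>

definition fun_of_rows :: "nat list list \<Rightarrow> nat \<times> nat \<Rightarrow> nat" where
  "fun_of_rows P = (\<lambda>(r, c). if r < length P \<and> c < length (P ! r) then P ! r ! c else 0)"

definition rows_of_fun :: "nat list \<Rightarrow> (nat \<times> nat \<Rightarrow> nat) \<Rightarrow> nat list list" where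
  "rows_of_fun nu T = map (\<lambda>r. map (\<lambda>c. T (r, c)) [0..<nu ! r]) [0..<length nu]"

definition ssyt_rows_of :: "nat list \<Rightarrow> nat multiset \<Rightarrow> nat list list set" where
  "ssyt_rows_of nu M = {P. ssyt_rows P \<and> map length P = nu \<and> mset (concat P) = M}"

definition weight_mset :: "nat list \<Rightarrow> nat multiset" where
  "weight_mset la = (\<Sum>i<length la. replicate_mset (la ! i) (Suc i))"

lemma cells_map_length: "(r, c) \<in> cells (map length P) \<longleftrightarrow> r < length P \<and> c < length (P ! r)"
  by (auto simp: cells_def)

lemma ssyt_fun_of_rows:
  assumes P: "ssyt_rows P" and pos: "\<forall>z\<in>set (concat P). 1 \<le> z"
  shows "ssyt (map length P) (fun_of_rows P)"
  unfolding ssyt_def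
proof (intro conjI allI impI ballI)
  fix x assume "x \<notin> cells (map length P)"
  then show "fun_of_rows P x = 0" by (cases x) (auto simp: cells_map_length fun_of_rows_def)
next
  fix x assume "x \<in> cells (map length P)"
  then show "1 \<le> fun_of_rows P x"
    using pos by (cases x) (auto simp: cells_map_length fun_of_rows_def, metis nth_mem)
next
  fix r c assume rc: "(r, Suc c) \<in> cells (map length P)"
  then have "sorted (P ! r)" using P by (auto simp: ssyt_rows_def cells_map_length)
  then show "fun_of_rows P (r, c) \<le> fun_of_rows P (r, Suc c)"
    using rc by (auto simp: fun_of_rows_def cells_map_length intro: sorted_nth_mono)
next
  fix r c assume rc: "(Suc r, c) \<in> cells (map length P)"
  then have "col_strict (P ! r) (P ! Suc r)" using P by (auto simp: ssyt_rows_def cells_map_length)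
  then show "fun_of_rows P (r, c) < fun_of_rows P (Suc r, c)"
    using rc by (auto simp: fun_of_rows_def cells_map_length col_strict_def)
qed

lemma length_rows_of_fun [simp]: "length (rows_of_fun nu T) = length nu"
  by (simp add: rows_of_fun_def)

lemma shape_rows_of_fun [simp]: "map length (rows_of_fun nu T) = nu"
  by (auto simp: rows_of_fun_def intro: nth_equalityI)

lemma fun_of_rows_of_fun:
  assumes "\<And>x. x \<notin> cells nu \<Longrightarrow> T x = 0"
  shows "fun_of_rows (rows_of_fun nu T) = T"
proof
  fix x :: "nat \<times> nat"
  show "fun_of_rows (rows_of_fun nu T) x = T x"
    using assms[of x] by (cases x) (auto simp: fun_of_rows_def rows_of_fun_def cells_def)
qed

lemma rows_of_fun_of_rows: "rows_of_fun (map length P) (fun_of_rows P) = P"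
  by (auto simp: rows_of_fun_def fun_of_rows_def intro!: nth_equalityI)

lemma ssyt_rows_rows_of_fun:
  assumes T: "ssyt nu T" and nu: "sorted_wrt (\<ge>) nu" "0 \<notin> set nu"
  shows "ssyt_rows (rows_of_fun nu T)"
proof -
  have rows: "sorted r \<and> r \<noteq> []" if r: "r \<in> set (rows_of_fun nu T)" for r
  proof -
    obtain i where i: "i < length nu" "r = map (\<lambda>c. T (i, c)) [0..<nu ! i]"
      using r by (auto simp: rows_of_fun_def)
    have "T (i, k) \<le> T (i, Suc k)" if "Suc k < nu ! i" for k
      using T i(1) that by (simp add: ssyt_def cells_def)
    then show ?thesis using i nu(2) by (auto simp: sorted_iff_nth_Suc in_set_conv_nth)
  qed
  have cols: "col_strict (rows_of_fun nu T ! i) (rows_of_fun nu T ! Suc i)"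
    if i: "Suc i < length (rows_of_fun nu T)" for i
  proof -
    have "nu ! Suc i \<le> nu ! i" using sorted_wrt_nth_less[OF nu(1), of i "Suc i"] i by simp
    moreover have "T (i, k) < T (Suc i, k)" if "k < nu ! Suc i" for k
      using T i that by (simp add: ssyt_def cells_def)
    ultimately show ?thesis using i by (simp add: col_strict_def rows_of_fun_def)
  qed
  show ?thesis using rows cols by (simp add: ssyt_rows_def)
qed

lemma count_concat_eq_card:
  "count (mset (concat P)) k = card {x \<in> cells (map length P). fun_of_rows P x = k}"
proof -
  have "{x \<in> cells (map length P). fun_of_rows P x = k} =
      Sigma {..<length P} (\<lambda>i. {c. c < length (P ! i) \<and> P ! i ! c = k})"
    by (auto simp: cells_map_length fun_of_rows_def)
  then have "card {x \<in> cells (map length P). fun_of_rows P x = k} =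
      (\<Sum>i<length P. card {c. c < length (P ! i) \<and> P ! i ! c = k})"
    by simp
  also have "\<dots> = (\<Sum>i<length P. count (mset (P ! i)) k)"
    by (rule sum.cong) (auto simp: count_mset count_list_eq_length_filter length_filter_conv_card eq_commute)
  also have "\<dots> = count (mset (concat P)) k"
    by (induction P) (simp_all add: sum.lessThan_Suc_shift del: sum.lessThan_Suc)
  finally show ?thesis ..
qed

lemma count_weight_mset:
  "count (weight_mset la) k = (if 1 \<le> k \<and> k \<le> length la then la ! (k - 1) else 0)"
proof -
  have "count (weight_mset la) k = (\<Sum>i<length la. if k = Suc i then la ! i else 0)"
    by (simp add: weight_mset_def count_sum)
  also have "\<dots> = (\<Sum>i\<in>{..<length la} \<inter> {k - 1}. if k = Suc i then la ! i else 0)"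
    by (rule sum.mono_neutral_right) auto
  also have "\<dots> = (if 1 \<le> k \<and> k \<le> length la then la ! (k - 1) else 0)"
    by (cases k) (auto simp: Int_insert_right)
  finally show ?thesis .
qed

lemma weight_mset_pos: "z \<in># weight_mset la \<Longrightarrow> 1 \<le> z"
  using count_weight_mset[of la z] by (metis not_in_iff)

lemma kostka_eq_card:
  assumes nu: "sorted_wrt (\<ge>) nu" "0 \<notin> set nu"
  shows "kostka nu la = card (ssyt_rows_of nu (weight_mset la))"
proof -
  have "bij_betw fun_of_rows (ssyt_rows_of nu (weight_mset la)) {T. ssyt nu T \<and> has_weight nu la T}"
  proof (rule bij_betw_byWitness[where f' = "rows_of_fun nu"])
    show "\<forall>P\<in>ssyt_rows_of nu (weight_mset la). rows_of_fun nu (fun_of_rows P) = P"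
      using rows_of_fun_of_rows by (auto simp: ssyt_rows_of_def)
    show "\<forall>T\<in>{T. ssyt nu T \<and> has_weight nu la T}. fun_of_rows (rows_of_fun nu T) = T"
      using fun_of_rows_of_fun ssyt_zero_outside by blast
    show "fun_of_rows ` ssyt_rows_of nu (weight_mset la) \<subseteq> {T. ssyt nu T \<and> has_weight nu la T}"
    proof clarify
      fix P assume P: "P \<in> ssyt_rows_of nu (weight_mset la)"
      then have "\<forall>z\<in>set (concat P). 1 \<le> z"
        using weight_mset_pos by (auto simp: ssyt_rows_of_def simp flip: set_mset_mset)
      then show "ssyt nu (fun_of_rows P) \<and> has_weight nu la (fun_of_rows P)"
        using P ssyt_fun_of_rows count_concat_eq_card[of P] count_weight_mset[of la]
        by (auto simp: ssyt_rows_of_def has_weight_def)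
    qed
    show "rows_of_fun nu ` {T. ssyt nu T \<and> has_weight nu la T} \<subseteq> ssyt_rows_of nu (weight_mset la)"
    proof clarify
      fix T assume T: "ssyt nu T" "has_weight nu la T"
      then have "fun_of_rows (rows_of_fun nu T) = T" using fun_of_rows_of_fun ssyt_zero_outside by blast
      then have "mset (concat (rows_of_fun nu T)) = weight_mset la"
        using T(2) count_concat_eq_card[of "rows_of_fun nu T"] count_weight_mset[of la]
        by (auto simp: has_weight_def intro: multiset_eqI)
      then show "rows_of_fun nu T \<in> ssyt_rows_of nu (weight_mset la)"
        using ssyt_rows_rows_of_fun[OF T(1) nu] by (simp add: ssyt_rows_of_def)
    qed
  qed
  then show ?thesis unfolding kostka_def by (simp add: bij_betw_same_card)
qed

lemma size_filter_weight_mset: "size (filter_mset (\<lambda>z. z \<le> i) (weight_mset la)) = sum_list (take i la)"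
proof -
  have replicate: "filter_mset P (replicate_mset m x) = (if P x then replicate_mset m x else {#})"
    for P m and x :: nat
    by (induction m) auto
  have "size (filter_mset (\<lambda>z. z \<le> i) (\<Sum>k<n. replicate_mset (la ! k) (Suc k))) =
      (\<Sum>k<n. if k < i then la ! k else 0)" for n
    by (induction n) (auto simp: replicate)
  moreover have "sum_list (take i la) = (\<Sum>k<min i (length la). la ! k)"
    by (simp add: sum_list_sum_nth atLeast0LessThan min.commute)
  moreover have "\<dots> = (\<Sum>k<length la. if k < i then la ! k else 0)"
    by (rule sum.mono_neutral_cong_left) auto
  ultimately show ?thesis by (simp add: weight_mset_def)
qed

lemma size_weight_mset: "size (weight_mset la) = sum_list la"
proof -
  have "filter_mset (\<lambda>z. z \<le> length la) (weight_mset la) = weight_mset la"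
    by (rule multiset_eqI) (simp add: count_weight_mset)
  then show ?thesis using size_filter_weight_mset[of "length la" la] by simp
qed

lemma ssyt_rows_entry_ge:
  assumes P: "ssyt_rows P" and pos: "\<forall>z\<in>set (concat P). 1 \<le> z"
  shows "r < length P \<Longrightarrow> c < length (P ! r) \<Longrightarrow> Suc r \<le> P ! r ! c"
proof (induction r arbitrary: c)
  case 0
  then show ?case using pos by (auto, metis nth_mem)
next
  case (Suc r)
  then have "col_strict (P ! r) (P ! Suc r)" using P by (simp add: ssyt_rows_def)
  then have "c < length (P ! r)" "P ! r ! c < P ! Suc r ! c"
    using Suc.prems by (auto simp: col_strict_def)
  then show ?case using Suc.IH Suc.prems by fastforce
qed

lemma ssyt_rows_of_weight_mset_dominates:
  assumes P: "P \<in> ssyt_rows_of nu (weight_mset la)"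
  shows "dominates nu la"
  unfolding dominates_def
proof
  fix i :: nat
  let ?le = "\<lambda>z. z \<le> i"
  have P: "ssyt_rows P" "map length P = nu" "mset (concat P) = weight_mset la"
    using P by (auto simp: ssyt_rows_of_def)
  have pos: "\<forall>z\<in>set (concat P). 1 \<le> z"
    using P(3) weight_mset_pos by (metis set_mset_mset)
  have "filter ?le (concat (drop i P)) = []"
  proof (rule filter_False, rule ballI)
    fix z assume "z \<in> set (concat (drop i P))"
    then obtain r c where "i \<le> r" "r < length P" "c < length (P ! r)" "z = P ! r ! c"
      by (auto simp: in_set_conv_nth) (metis add.commute le_add2 less_diff_conv)
    then show "\<not> z \<le> i" using ssyt_rows_entry_ge[OF P(1) pos] by fastforce
  qed
  then have "length (filter ?le (concat P)) = length (filter ?le (concat (take i P)))"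
    by (metis append_Nil2 append_take_drop_id concat_append filter_append)
  also have "\<dots> \<le> length (concat (take i P))" by (rule length_filter_le)
  also have "\<dots> = sum_list (take i nu)"
    using P(2) by (auto simp: length_concat take_map)
  finally show "sum_list (take i la) \<le> sum_list (take i nu)"
    using P(3) size_filter_weight_mset[of i la] by (metis mset_filter size_mset)
qed

lemma kostka_eq_0_if_not_dominates:
  assumes "nu \<in> partitions_of m" "\<not> dominates nu la"
  shows "kostka nu la = 0"
proof -
  have "ssyt_rows_of nu (weight_mset la) = {}"
    using assms(2) ssyt_rows_of_weight_mset_dominates by blast
  then show ?thesis using assms(1) kostka_eq_card by (simp add: partitions_of_def)
qed


section \<open>Descent-preserving decomposition of words\<close>

lemma finite_partitions_of: "finite (partitions_of n)"
proof (rule finite_subset)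
  have "length nu \<le> sum_list nu" if "0 \<notin> set nu" for nu :: "nat list"
    using that by (induction nu) auto
  then show "partitions_of n \<subseteq> {nu. set nu \<subseteq> {..n} \<and> length nu \<le> n}"
    using member_le_sum_list by (fastforce simp: partitions_of_def)
  show "finite {nu. set nu \<subseteq> {..n} \<and> length nu \<le> n}"
    by (rule finite_lists_length_le) simp
qed

lemma shape_in_partitions_of: "ssyt_rows P \<Longrightarrow> map length P \<in> partitions_of (length (concat P))"
  using ssyt_rows_shape[of P] by (auto simp: partitions_of_def ssyt_rows_def length_concat)

lemma sum_words_by_shape:
  fixes f :: "nat set \<Rightarrow> 'a :: comm_semiring_1"
  shows "(\<Sum>w | mset w = M. f (word_Des w)) =
    (\<Sum>nu\<in>partitions_of (size M). of_nat (card (ssyt_rows_of nu M)) * (\<Sum>S | syt nu S. f (syt_Des nu S)))"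
proof -
  let ?shape = "\<lambda>PS :: nat list list \<times> (nat \<times> nat \<Rightarrow> nat). map length (fst PS)"
  let ?g = "\<lambda>PS. f (syt_Des (?shape PS) (snd PS))"
  have words: "finite {w. mset w = M}"
    using finite_permutations_of_multiset[of M] by (simp add: permutations_of_multiset_def)
  have "(\<Sum>w | mset w = M. f (word_Des w)) = (\<Sum>w | mset w = M. ?g (rsk w))"
    using syt_Des_rsk by (intro sum.cong) (auto split: prod.split)
  also have "\<dots> = (\<Sum>PS\<in>rs_pairs M. ?g PS)"
    by (rule sum.reindex_bij_betw[OF bij_betw_rsk])
  also have "\<dots> = (\<Sum>nu\<in>partitions_of (size M). \<Sum>PS\<in>{PS \<in> rs_pairs M. ?shape PS = nu}. ?g PS)"
  proof (rule sum.group[symmetric])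
    show "finite (rs_pairs M)" using bij_betw_finite[OF bij_betw_rsk] words by blast
    show "?shape ` rs_pairs M \<subseteq> partitions_of (size M)"
      using shape_in_partitions_of by (fastforce simp: rs_pairs_def simp flip: size_mset)
  qed (rule finite_partitions_of)
  also have "\<dots> = (\<Sum>nu\<in>partitions_of (size M).
      of_nat (card (ssyt_rows_of nu M)) * (\<Sum>S | syt nu S. f (syt_Des nu S)))"
  proof (rule sum.cong)
    fix nu
    have "{PS \<in> rs_pairs M. ?shape PS = nu} = ssyt_rows_of nu M \<times> {S. syt nu S}"
      by (auto simp: rs_pairs_def ssyt_rows_of_def)
    then have "(\<Sum>PS\<in>{PS \<in> rs_pairs M. ?shape PS = nu}. ?g PS) =
        (\<Sum>P\<in>ssyt_rows_of nu M. \<Sum>S | syt nu S. ?g (P, S))"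
      by (simp add: sum.cartesian_product case_prod_unfold)
    also have "\<dots> = (\<Sum>P\<in>ssyt_rows_of nu M. \<Sum>S | syt nu S. f (syt_Des nu S))"
      by (rule sum.cong) (auto simp: ssyt_rows_of_def)
    finally show "(\<Sum>PS\<in>{PS \<in> rs_pairs M. ?shape PS = nu}. ?g PS) =
        of_nat (card (ssyt_rows_of nu M)) * (\<Sum>S | syt nu S. f (syt_Des nu S))"
      by simp
  qed simp
  finally show ?thesis .
qed

lemma sum_syt_eq_sum_QYT:
  "sorted_wrt (\<ge>) nu \<Longrightarrow>
    (\<Sum>S | syt nu S. f (syt_Des nu S)) = (\<Sum>T\<in>QYT nu. f (syt_Des nu (standardize nu T)))"
  by (rule sum.reindex_bij_betw[OF bij_betw_standardize, symmetric])

theorem mainTheorem9: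
  fixes la :: "nat list" and n :: nat and q t :: "'a :: comm_ring_1"
  assumes "la \<in> partitions_of n"
  shows "(\<Sum>w\<in>words la. q ^ word_maj w * t ^ word_des w) =
         (\<Sum>nu\<in>{nu \<in> partitions_of n. dominates nu la}.
             of_nat (kostka nu la) * (\<Sum>T\<in>QYT nu. q ^ tab_maj nu T * t ^ tab_des nu T))"
proof -
  define f :: "nat set \<Rightarrow> 'a" where "f D = q ^ \<Sum>D * t ^ card D" for D
  have n: "size (weight_mset la) = n" using assms by (simp add: size_weight_mset partitions_of_def)
  have kostka: "kostka nu la = card (ssyt_rows_of nu (weight_mset la))" if "nu \<in> partitions_of n" for nu
    using that kostka_eq_card by (simp add: partitions_of_def)
  have "(\<Sum>w\<in>words la. q ^ word_maj w * t ^ word_des w) = (\<Sum>w | mset w = weight_mset la. f (word_Des w))"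
    by (simp add: words_def weight_mset_def word_maj_def word_des_def f_def)
  also have "\<dots> = (\<Sum>nu\<in>partitions_of n.
      of_nat (kostka nu la) * (\<Sum>T\<in>QYT nu. f (syt_Des nu (standardize nu T))))"
    unfolding sum_words_by_shape n
    by (intro sum.cong refl) (simp add: kostka sum_syt_eq_sum_QYT partitions_of_def)
  also have "\<dots> = (\<Sum>nu\<in>partitions_of n.
      of_nat (kostka nu la) * (\<Sum>T\<in>QYT nu. q ^ tab_maj nu T * t ^ tab_des nu T))"
    by (simp add: f_def tab_maj_def tab_des_def)
  also have "\<dots> = (\<Sum>nu\<in>{nu \<in> partitions_of n. dominates nu la}.
      of_nat (kostka nu la) * (\<Sum>T\<in>QYT nu. q ^ tab_maj nu T * t ^ tab_des nu T))"
    using kostka_eq_0_if_not_dominates[of _ n la] by (intro sum.mono_neutral_right finite_partitions_of) auto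
  finally show ?thesis .
qed

end
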